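(* Let $\mathbf R'=\{R'_i,t'_i\}$, $\mathbf S=\{S_i,u_i\}$, $\mathbf S'=\{S'_i,u'_i\}$ be preperfectoid towers arising from pairs $(R',I'_0)$, $(S,J_0)$, $(S',J'_0)$, with first perfectoid pillars $I'_1,J_1,J'_1$. Let $\psi'\colon\mathbf R'\to\mathbf S'$ and $\sigma\colon\mathbf S\to\mathbf S'$ be morphisms of towers with $I'_0S'_0=J_0S'_0=J'_0$ and $I'_1S'_1=J_1S'_1=J'_1$ (extensions along $\psi'_0,\sigma_0$, resp. $\psi'_1,\sigma_1$), and with every $\sigma_i$ surjective. Let $\mathbf R=\{R_i,t_i\}$ be the levelwise fibre product $R_i=R'_i\times_{S'_i}S_i$ with projections $\rho\colon\mathbf R\to\mathbf R'$, $\psi\colon\mathbf R\to\mathbf S$, and define ideals $I_0:=I'_0\times_{J'_0}J_0\subset R_0$ and $I_1:=I'_1\times_{J'_1}J_1\subset R_1$. Assume: (i) $I_0$ is generated by an element $f_0=(f'_0,g_0)$ with $f'_0R'_0=I'_0$ and $g_0S_0=J_0$; (ii) $I_1$ is generated by an element $f_1=(f'_1,g_1)$ with $f'_1R'_1=I'_1$ and $g_1S_1=J_1$; (iii) for every $i\ge0$, the squares of modules formed by $I_0R_i\to J_0S_i$, $I_0R_i\to I'_0R'_i$, $I'_0R'_i\to J'_0S'_i$, $J_0S_i\to J'_0S'_i$ (restrictions of $\psi_i,\rho_i,\psi'_i,\sigma_i$), and by $I_1R_{i+1}\to J_1S_{i+1}$, $I_1R_{i+1}\to I'_1R'_{i+1}$,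 $I'_1R'_{i+1}\to J'_1S'_{i+1}$, $J_1S_{i+1}\to J'_1S'_{i+1}$ (restrictions of $\psi_{i+1},\rho_{i+1},\psi'_{i+1},\sigma_{i+1}$) are cartesian; (iv) for every $i\ge0$ the map $(R'_i)_{I'_0\text{-tor}}\oplus(S_i)_{J_0\text{-tor}}\to(S'_i)_{J'_0\text{-tor}}$, $(a,b)\mapsto\psi'_i(a)+\sigma_i(b)$, is surjective. Let $R:=R_0$. Then: (1) $\mathbf R$ is a preperfectoid tower arising from $(R,I_0)$ with first perfectoid pillar $I_1$; (2) if $\mathbf R',\mathbf S,\mathbf S'$ are perfectoid towers, then $\mathbf R$ is a perfectoid tower arising from $(R,I_0)$; (3) the tilt of $\mathbf R$ is the tower $\{{R'_i}^{s.\flat}\times_{{S'_i}^{s.\flat}}S_i^{s.\flat}\}_{i\ge0}$ (fibre products along the tilts of $\psi'$ and $\sigma$).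
   Context: Fix a prime $p$; rings are commutative with $1$. For a ring $A$, an ideal $I$ and an $A$-module $M$, $M_{I\text{-tor}}$ is the submodule of $x\in M$ such that for every $a\in I$ some $a^nx=0$; $\varphi_{I,A}\colon A_{I\text{-tor}}\to A/IA$ is inclusion followed by projection. $\varphi$ is absolute Frobenius. A tower of rings $\{R_i,t_i\}_{i\ge0}$ is a sequence of ring maps $R_0\xrightarrow{t_0}R_1\to\cdots$; morphisms of towers are compatible families of ring maps. For a ring $R$ and ideal $I_0$, write $\overline{R_i}=R_i/I_0R_i$, $\overline{t_i}$ the induced maps. A purely inseparable tower arising from $(R,I_0)$: (a) $R_0=R$, $p\in I_0$; (b) each $\overline{t_i}$ injective; (c) $\varphi(\overline{R_{i+1}})\subset\overline{t_i}(\overline{R_i})$; then $F_i\colon\overline{R_{i+1}}\to\overline{R_i}$ is the unique ring map with $\overline{t_i}\circ F_i=\varphi$. Conditions: (d) each $F_i$ surjective; (e) $I_0R_i$ lies in the Jacobson radical of $R_i$ for all $i$; (f) $I_0$ principal and a principal ideal $I_1\subset R_1$ (the first perfectoid pillar) with $I_1^p=I_0R_1$ and $\ker F_i=I_1\overline{R_{i+1}}$ for all $i$; (g) for all $i$, $I_0(R_i)_{I_0\text{-tor}}=0$ and a bijection $(F_i)_{\mathrm{tor}}\colon(R_{i+1})_{I_0\text{-tor}}\to(R_i)_{I_0\text{-tor}}$ with $\varphi_{I_0,R_i}\circ(F_i)_{\mathrm{tor}}=F_i\circ\varphi_{I_0,R_{i+1}}$. Preperfectoid: (a)–(d),(f),(g);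 perfectoid: additionally (e). Tilt: $R_i^{s.\flat}:=\varprojlim(\cdots\xrightarrow{F_{i+1}}\overline{R_{i+1}}\xrightarrow{F_i}\overline{R_i})$ with transition maps induced by the $\overline{t_j}$. For a morphism of towers $\alpha$ with $\alpha_0(I_0)\subset J_0$ between preperfectoid towers, $\alpha_i$ induce maps $\overline{R_j}\to\overline{S_j}$ compatible with Frobenius projections, hence maps $\alpha_i^{s.\flat}\colon R_i^{s.\flat}\to S_i^{s.\flat}$ (the tilt of $\alpha$). *)

theory Defs
  imports "HOL-Algebra.Algebra" "HOL-Computational_Algebra.Primes"
begin

definition tower :: "(nat \<Rightarrow> 'a ring) \<Rightarrow> (nat \<Rightarrow> 'a \<Rightarrow> 'a) \<Rightarrow> bool" where
  "tower Rs ts \<longleftrightarrow> (\<forall>i. cring (Rs i)) \<and> (\<forall>i. ts i \<in> ring_hom (Rs i) (Rs (Suc i)))"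

definition tower_mor :: "(nat \<Rightarrow> 'a ring) \<Rightarrow> (nat \<Rightarrow> 'a \<Rightarrow> 'a) \<Rightarrow>
    (nat \<Rightarrow> 'b ring) \<Rightarrow> (nat \<Rightarrow> 'b \<Rightarrow> 'b) \<Rightarrow> (nat \<Rightarrow> 'a \<Rightarrow> 'b) \<Rightarrow> bool" where
  "tower_mor Rs ts Ss us \<alpha> \<longleftrightarrow>
     (\<forall>i. \<alpha> i \<in> ring_hom (Rs i) (Ss i)) \<and>
     (\<forall>i. \<forall>x\<in>carrier (Rs i). \<alpha> (Suc i) (ts i x) = us i (\<alpha> i x))"

fun tmap :: "(nat \<Rightarrow> 'a \<Rightarrow> 'a) \<Rightarrow> nat \<Rightarrow> nat \<Rightarrow> 'a \<Rightarrow> 'a" where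
  "tmap ts j 0 = (\<lambda>x. x)"
| "tmap ts j (Suc k) = ts (j + k) \<circ> tmap ts j k"

definition extI :: "(nat \<Rightarrow> 'a ring) \<Rightarrow> (nat \<Rightarrow> 'a \<Rightarrow> 'a) \<Rightarrow> nat \<Rightarrow> 'a set \<Rightarrow> nat \<Rightarrow> 'a set" where
  "extI Rs ts j I k = Idl\<^bsub>Rs (j + k)\<^esub> (tmap ts j k ` I)"

definition Rbar :: "(nat \<Rightarrow> 'a ring) \<Rightarrow> (nat \<Rightarrow> 'a \<Rightarrow> 'a) \<Rightarrow> 'a set \<Rightarrow> nat \<Rightarrow> 'a set ring" where
  "Rbar Rs ts I0 i = FactRing (Rs i) (extI Rs ts 0 I0 i)"

text \<open>Map on quotients induced by f : A -> S, where S is reduced modulo the ideal J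
  (a coset X is sent to the coset of f x, x in X).\<close>
definition ind_map :: "('b, 'n) ring_scheme \<Rightarrow> 'b set \<Rightarrow> ('a \<Rightarrow> 'b) \<Rightarrow> 'a set \<Rightarrow> 'b set" where
  "ind_map S J f C = (\<Union>x\<in>C. J +>\<^bsub>S\<^esub> f x)"

definition tbar :: "(nat \<Rightarrow> 'a ring) \<Rightarrow> (nat \<Rightarrow> 'a \<Rightarrow> 'a) \<Rightarrow> 'a set \<Rightarrow> nat \<Rightarrow> 'a set \<Rightarrow> 'a set" where
  "tbar Rs ts I0 i = ind_map (Rs (Suc i)) (extI Rs ts 0 I0 (Suc i)) (ts i)"

definition Frob :: "nat \<Rightarrow> (nat \<Rightarrow> 'a ring) \<Rightarrow> (nat \<Rightarrow> 'a \<Rightarrow> 'a) \<Rightarrow> 'a set \<Rightarrow> nat \<Rightarrow> 'a set \<Rightarrow> 'a set" where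
  "Frob p Rs ts I0 i Y = (THE W. W \<in> carrier (Rbar Rs ts I0 i) \<and>
       tbar Rs ts I0 i W = Y [^]\<^bsub>Rbar Rs ts I0 (Suc i)\<^esub> p)"

text \<open>I-torsion of a ring A regarded as a module over a ring R via h : R -> A, I an ideal of R.\<close>
definition tor :: "('a, 'm) ring_scheme \<Rightarrow> ('r \<Rightarrow> 'a) \<Rightarrow> 'r set \<Rightarrow> 'a set" where
  "tor A h I = {x \<in> carrier A. \<forall>a\<in>I. \<exists>n::nat. (h a) [^]\<^bsub>A\<^esub> n \<otimes>\<^bsub>A\<^esub> x = \<zero>\<^bsub>A\<^esub>}"

definition torR :: "(nat \<Rightarrow> 'a ring) \<Rightarrow> (nat \<Rightarrow> 'a \<Rightarrow> 'a) \<Rightarrow> 'a set \<Rightarrow> nat \<Rightarrow> 'a set" where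
  "torR Rs ts I0 i = tor (Rs i) (tmap ts 0 i) I0"

definition jacobson :: "('a, 'm) ring_scheme \<Rightarrow> 'a set" where
  "jacobson R = {x \<in> carrier R. \<forall>M. maximalideal M R \<longrightarrow> x \<in> M}"

definition preperfectoid :: "nat \<Rightarrow> (nat \<Rightarrow> 'a ring) \<Rightarrow> (nat \<Rightarrow> 'a \<Rightarrow> 'a) \<Rightarrow> 'a set \<Rightarrow> 'a set \<Rightarrow> bool" where
  "preperfectoid p Rs ts I0 I1 \<longleftrightarrow>
     tower Rs ts \<and>
     \<comment> \<open>(a)\<close>
     ideal I0 (Rs 0) \<and> add_pow (Rs 0) p \<one>\<^bsub>Rs 0\<^esub> \<in> I0 \<and>
     \<comment> \<open>(b)\<close>
     (\<forall>i. inj_on (tbar Rs ts I0 i) (carrier (Rbar Rs ts I0 i))) \<and>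
     \<comment> \<open>(c)\<close>
     (\<forall>i. \<forall>Y\<in>carrier (Rbar Rs ts I0 (Suc i)).
          Y [^]\<^bsub>Rbar Rs ts I0 (Suc i)\<^esub> p \<in> tbar Rs ts I0 i ` carrier (Rbar Rs ts I0 i)) \<and>
     \<comment> \<open>(d)\<close>
     (\<forall>i. Frob p Rs ts I0 i ` carrier (Rbar Rs ts I0 (Suc i)) = carrier (Rbar Rs ts I0 i)) \<and>
     \<comment> \<open>(f)\<close>
     (\<exists>f\<in>carrier (Rs 0). I0 = PIdl\<^bsub>Rs 0\<^esub> f) \<and>
     (\<exists>f\<in>carrier (Rs 1). I1 = PIdl\<^bsub>Rs 1\<^esub> f) \<and>
     I1 [^]\<^bsub>ideals_set (Rs 1)\<^esub> p = extI Rs ts 0 I0 1 \<and>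
     (\<forall>i. a_kernel (Rbar Rs ts I0 (Suc i)) (Rbar Rs ts I0 i) (Frob p Rs ts I0 i) =
          (\<lambda>x. extI Rs ts 0 I0 (Suc i) +>\<^bsub>Rs (Suc i)\<^esub> x) ` extI Rs ts 1 I1 i) \<and>
     \<comment> \<open>(g)\<close>
     (\<forall>i. \<forall>a\<in>I0. \<forall>x\<in>torR Rs ts I0 i. tmap ts 0 i a \<otimes>\<^bsub>Rs i\<^esub> x = \<zero>\<^bsub>Rs i\<^esub>) \<and>
     (\<forall>i. \<exists>G. bij_betw G (torR Rs ts I0 (Suc i)) (torR Rs ts I0 i) \<and>
          (\<forall>x\<in>torR Rs ts I0 (Suc i).
             extI Rs ts 0 I0 i +>\<^bsub>Rs i\<^esub> G x =
             Frob p Rs ts I0 i (extI Rs ts 0 I0 (Suc i) +>\<^bsub>Rs (Suc i)\<^esub> x)))"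

definition perfectoid :: "nat \<Rightarrow> (nat \<Rightarrow> 'a ring) \<Rightarrow> (nat \<Rightarrow> 'a \<Rightarrow> 'a) \<Rightarrow> 'a set \<Rightarrow> 'a set \<Rightarrow> bool" where
  "perfectoid p Rs ts I0 I1 \<longleftrightarrow> preperfectoid p Rs ts I0 I1 \<and>
     (\<forall>i. extI Rs ts 0 I0 i \<subseteq> jacobson (Rs i))"

definition fib_set :: "'a set \<Rightarrow> 'b set \<Rightarrow> ('a \<Rightarrow> 'c) \<Rightarrow> ('b \<Rightarrow> 'c) \<Rightarrow> ('a \<times> 'b) set" where
  "fib_set A B f g = {(a, b). a \<in> A \<and> b \<in> B \<and> f a = g b}"

definition fibprod :: "('a, 'm) ring_scheme \<Rightarrow> ('b, 'n) ring_scheme \<Rightarrow> ('a \<Rightarrow> 'c) \<Rightarrow> ('b \<Rightarrow> 'c)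
    \<Rightarrow> ('a \<times> 'b) ring" where
  "fibprod A B f g =
     \<lparr>carrier = fib_set (carrier A) (carrier B) f g,
      monoid.mult = (\<lambda>x y. (fst x \<otimes>\<^bsub>A\<^esub> fst y, snd x \<otimes>\<^bsub>B\<^esub> snd y)),
      monoid.one = (\<one>\<^bsub>A\<^esub>, \<one>\<^bsub>B\<^esub>),
      ring.zero = (\<zero>\<^bsub>A\<^esub>, \<zero>\<^bsub>B\<^esub>),
      ring.add = (\<lambda>x y. (fst x \<oplus>\<^bsub>A\<^esub> fst y, snd x \<oplus>\<^bsub>B\<^esub> snd y))\<rparr>"

text \<open>The square A -f-> B -h-> D, A -g-> C -k-> D is cartesian (as a square of modules,
  equivalently of sets): the canonical map A -> B x_D C is bijective.\<close>
definition cartesian :: "'a set \<Rightarrow> 'b set \<Rightarrow> 'c set \<Rightarrow> ('a \<Rightarrow> 'b) \<Rightarrow> ('a \<Rightarrow> 'c)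
    \<Rightarrow> ('b \<Rightarrow> 'd) \<Rightarrow> ('c \<Rightarrow> 'd) \<Rightarrow> bool" where
  "cartesian A B C f g h k \<longleftrightarrow> bij_betw (\<lambda>x. (f x, g x)) A (fib_set B C h k)"

definition tilt :: "nat \<Rightarrow> (nat \<Rightarrow> 'a ring) \<Rightarrow> (nat \<Rightarrow> 'a \<Rightarrow> 'a) \<Rightarrow> 'a set \<Rightarrow> nat
    \<Rightarrow> (nat \<Rightarrow> 'a set) ring" where
  "tilt p Rs ts I0 i =
     \<lparr>carrier = {x. (\<forall>j. x j \<in> carrier (Rbar Rs ts I0 (i + j))) \<and>
                    (\<forall>j. Frob p Rs ts I0 (i + j) (x (Suc j)) = x j)},
      monoid.mult = (\<lambda>x y j. x j \<otimes>\<^bsub>Rbar Rs ts I0 (i + j)\<^esub> y j),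
      monoid.one = (\<lambda>j. \<one>\<^bsub>Rbar Rs ts I0 (i + j)\<^esub>),
      ring.zero = (\<lambda>j. \<zero>\<^bsub>Rbar Rs ts I0 (i + j)\<^esub>),
      ring.add = (\<lambda>x y j. x j \<oplus>\<^bsub>Rbar Rs ts I0 (i + j)\<^esub> y j)\<rparr>"

definition tilt_t :: "(nat \<Rightarrow> 'a ring) \<Rightarrow> (nat \<Rightarrow> 'a \<Rightarrow> 'a) \<Rightarrow> 'a set \<Rightarrow> nat
    \<Rightarrow> (nat \<Rightarrow> 'a set) \<Rightarrow> (nat \<Rightarrow> 'a set)" where
  "tilt_t Rs ts I0 i x = (\<lambda>j. tbar Rs ts I0 (i + j) (x j))"

text \<open>Tilt of a morphism of towers alpha (with alpha_0(I0) contained in J0).\<close>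
definition tilt_mor :: "(nat \<Rightarrow> 'b ring) \<Rightarrow> (nat \<Rightarrow> 'b \<Rightarrow> 'b) \<Rightarrow> 'b set \<Rightarrow> (nat \<Rightarrow> 'a \<Rightarrow> 'b)
    \<Rightarrow> nat \<Rightarrow> (nat \<Rightarrow> 'a set) \<Rightarrow> (nat \<Rightarrow> 'b set)" where
  "tilt_mor Ss us J0 \<alpha> i x = (\<lambda>j. ind_map (Ss (i + j)) (extI Ss us 0 J0 (i + j)) (\<alpha> (i + j)) (x j))"

end

theory Submission
  imports Defs
begin

text \<open>All the structure of the fibre product tower is computed componentwise.  By the cartesian
  squares (iii), \<open>I\<^sub>0R\<^sub>i\<close> and \<open>I\<^sub>1R\<^sub>i\<^sub>+\<^sub>1\<close> are the fibre products of the corresponding ideals of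
  \<open>R'\<close> and \<open>S\<close>, so reductions, Frobenius projections,
  their kernels, torsion and tilts are fibre products as well.  Only two points need more: surjectivity of the Frobenius projections,
  where a preimage is corrected by an element of \<open>J\<^sub>1S\<^sub>i\<^sub>+\<^sub>1\<close> using the surjectivity of \<open>\<sigma>\<close>; and
  \<open>I\<^sub>1\<^sup>p = I\<^sub>0R\<^sub>1\<close>, where the torsion hypothesis (iv) removes the obstruction to lifting a
  compatible pair of multiples of the generators.\<close>

lemma (in cring) add_minus_cancel_left: "a \<in> carrier R \<Longrightarrow> b \<in> carrier R \<Longrightarrow> (a \<oplus> b) \<ominus> a = b"
  by algebra

lemma (in cring) add_minus_cancel: "a \<in> carrier R \<Longrightarrow> b \<in> carrier R \<Longrightarrow> a \<oplus> (b \<ominus> a) = b"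
  by algebra

lemma (in cring) minus_eq_add_swap:
  assumes "x \<in> carrier R" "y \<in> carrier R" "u \<in> carrier R" "v \<in> carrier R"
    and "x \<ominus> y = u \<oplus> v"
  shows "x \<ominus> u = y \<oplus> v"
proof -
  have "x \<ominus> u = (x \<ominus> y) \<oplus> y \<ominus> u" using assms(1-3) by algebra
  also have "\<dots> = y \<oplus> v" using assms by algebra
  finally show ?thesis .
qed

lemma ring_hom_cring_of:
  "cring A \<Longrightarrow> cring B \<Longrightarrow> h \<in> ring_hom A B \<Longrightarrow> ring_hom_cring A B h"
  by (intro ring_hom_cring.intro ring_hom_cring_axioms.intro)

lemma (in ring_hom_cring) hom_minus:
  "x \<in> carrier R \<Longrightarrow> y \<in> carrier R \<Longrightarrow> h (x \<ominus> y) = h x \<ominus>\<^bsub>S\<^esub> h y"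
  by (simp add: a_minus_def)

lemma (in ring_hom_cring) hom_add_pow:
  "x \<in> carrier R \<Longrightarrow> h (add_pow R (n::nat) x) = add_pow S n (h x)"
  by (induction n) (auto simp: R.add.nat_pow_Suc S.add.nat_pow_Suc)

lemma a_r_coset_eq_iff:
  assumes "ring R" "ideal I R" "a \<in> carrier R" "b \<in> carrier R"
  shows "I +>\<^bsub>R\<^esub> a = I +>\<^bsub>R\<^esub> b \<longleftrightarrow> a \<ominus>\<^bsub>R\<^esub> b \<in> I"
  using ring.quotient_eq_iff_same_a_r_cos[OF assms] by simp

lemma mem_a_r_coset_iff:
  fixes R (structure)
  assumes "ring R" "ideal I R" "a \<in> carrier R"
  shows "x \<in> I +>\<^bsub>R\<^esub> a \<longleftrightarrow> x \<in> carrier R \<and> x \<ominus>\<^bsub>R\<^esub> a \<in> I"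
proof -
  interpret ring R by fact
  interpret ideal I R by fact
  show ?thesis
  proof
    assume "x \<in> I +> a"
    then obtain i where i: "i \<in> I" "x = i \<oplus> a" by (auto simp: a_r_coset_def')
    then show "x \<in> carrier R \<and> x \<ominus> a \<in> I"
      using Icarr[OF i(1)] assms(3) by (simp add: a_minus_def a_assoc r_neg)
  next
    assume x: "x \<in> carrier R \<and> x \<ominus> a \<in> I"
    then have "x = (x \<ominus> a) \<oplus> a" using assms(3) by algebra
    then show "x \<in> I +> a" using x by (auto simp: a_r_coset_def')
  qed
qed

lemma ind_map_a_r_coset:
  assumes A: "ring A" and B: "ring B" and h: "h \<in> ring_hom A B"
    and I: "ideal I A" and J: "ideal J B" and hIJ: "h ` I \<subseteq> J" and a: "a \<in> carrier A"
  shows "ind_map B J h (I +>\<^bsub>A\<^esub> a) = J +>\<^bsub>B\<^esub> h a"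
proof -
  interpret A: ring A by fact
  interpret B: ring B by fact
  interpret H: ring_hom_ring A B h by (intro ring_hom_ringI2 A B h)
  have "J +>\<^bsub>B\<^esub> h x = J +>\<^bsub>B\<^esub> h a" if "x \<in> I +>\<^bsub>A\<^esub> a" for x
  proof -
    have x: "x \<in> carrier A" "x \<ominus>\<^bsub>A\<^esub> a \<in> I" using that mem_a_r_coset_iff[OF A I a] by auto
    then have "h x \<ominus>\<^bsub>B\<^esub> h a \<in> J" using hIJ a by (auto simp: a_minus_def)
    then show ?thesis using a_r_coset_eq_iff[OF B J] x a by simp
  qed
  moreover have "a \<in> I +>\<^bsub>A\<^esub> a"
    using mem_a_r_coset_iff[OF A I a] a I
    by (simp add: a_minus_def A.r_neg additive_subgroup.zero_closed ideal.axioms(1))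
  ultimately show ?thesis unfolding ind_map_def by blast
qed

lemma a_r_coset_in_image_iff:
  fixes R (structure)
  assumes "ring R" "ideal I R" "ideal K R" "I \<subseteq> K" "a \<in> carrier R"
  shows "I +>\<^bsub>R\<^esub> a \<in> (\<lambda>k. I +>\<^bsub>R\<^esub> k) ` K \<longleftrightarrow> a \<in> K"
proof
  interpret ring R by fact
  interpret K: ideal K R by fact
  assume "I +> a \<in> (\<lambda>k. I +> k) ` K"
  then obtain k where k: "k \<in> K" "I +> a = I +> k" by blast
  then have "a \<ominus> k \<in> K" using a_r_coset_eq_iff[OF assms(1,2,5)] K.Icarr assms(4) by blast
  moreover have "a = (a \<ominus> k) \<oplus> k" using assms(5) K.Icarr[OF k(1)] by algebra
  ultimately show "a \<in> K" using k(1) by (metis K.a_closed)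
qed (use assms in blast)

context
  fixes R (structure) and I
  assumes R: "cring R" and I: "ideal I R"
begin

interpretation cring R by (rule R)
interpretation ideal I R by (rule I)

lemma FactRing_carrier: "carrier (R Quot I) = (\<lambda>a. I +> a) ` carrier R"
  by (auto simp: FactRing_def A_RCOSETS_def RCOSETS_def a_r_coset_def)

lemma FactRing_mult_coset:
  "a \<in> carrier R \<Longrightarrow> b \<in> carrier R \<Longrightarrow> (I +> a) \<otimes>\<^bsub>R Quot I\<^esub> (I +> b) = I +> (a \<otimes> b)"
  by (simp add: FactRing_def rcoset_mult_add)

lemma FactRing_add_coset:
  "a \<in> carrier R \<Longrightarrow> b \<in> carrier R \<Longrightarrow> (I +> a) \<oplus>\<^bsub>R Quot I\<^esub> (I +> b) = I +> (a \<oplus> b)"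
  by (simp add: FactRing_def a_rcos_sum)

lemma FactRing_pow_coset: "a \<in> carrier R \<Longrightarrow> (I +> a) [^]\<^bsub>R Quot I\<^esub> (n::nat) = I +> (a [^] n)"
  using ring_hom_ring.hom_nat_pow[OF rcos_ring_hom_ring] by simp

lemma FactRing_one: "\<one>\<^bsub>R Quot I\<^esub> = I +> \<one>"
  by (simp add: FactRing_def)

lemma FactRing_zero: "\<zero>\<^bsub>R Quot I\<^esub> = I"
  by (simp add: FactRing_def)

end

lemma ring_hom_genideal_subset:
  assumes A: "ring A" and B: "ring B" and h: "h \<in> ring_hom A B" and S: "S \<subseteq> carrier A"
  shows "h ` (Idl\<^bsub>A\<^esub> S) \<subseteq> Idl\<^bsub>B\<^esub> (h ` S)"
proof -
  interpret A: ring A by fact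
  interpret B: ring B by fact
  interpret H: ring_hom_ring A B h by (intro ring_hom_ringI2 A B h)
  have hS: "h ` S \<subseteq> carrier B" using S by auto
  have "ideal {r \<in> carrier A. h r \<in> Idl\<^bsub>B\<^esub> (h ` S)} A"
    by (rule H.ideal_vimage[OF B.genideal_ideal[OF hS]])
  moreover have "S \<subseteq> {r \<in> carrier A. h r \<in> Idl\<^bsub>B\<^esub> (h ` S)}"
    using S B.genideal_self[OF hS] by auto
  ultimately have "Idl\<^bsub>A\<^esub> S \<subseteq> {r \<in> carrier A. h r \<in> Idl\<^bsub>B\<^esub> (h ` S)}"
    by (rule A.genideal_minimal)
  then show ?thesis by auto
qed

lemma ring_hom_genideal_surj:
  assumes A: "ring A" and B: "ring B" and h: "h \<in> ring_hom A B" and S: "S \<subseteq> carrier A"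
    and surj: "h ` carrier A = carrier B"
  shows "h ` (Idl\<^bsub>A\<^esub> S) = Idl\<^bsub>B\<^esub> (h ` S)"
proof
  show "h ` (Idl\<^bsub>A\<^esub> S) \<subseteq> Idl\<^bsub>B\<^esub> (h ` S)" by (rule ring_hom_genideal_subset[OF A B h S])
  interpret A: ring A by fact
  interpret B: ring B by fact
  interpret H: ring_hom_ring A B h by (intro ring_hom_ringI2 A B h)
  have IA: "ideal (Idl\<^bsub>A\<^esub> S) A" by (rule A.genideal_ideal[OF S])
  have "ideal (h ` (Idl\<^bsub>A\<^esub> S)) B"
  proof (rule idealI[OF B])
    show "subgroup (h ` (Idl\<^bsub>A\<^esub> S)) (add_monoid B)"
      by (rule H.img_is_add_subgroup) (use IA in \<open>simp add: ideal_def additive_subgroup_def\<close>)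
    fix a x assume "a \<in> h ` (Idl\<^bsub>A\<^esub> S)" and "x \<in> carrier B"
    then obtain a' x' where a': "a' \<in> Idl\<^bsub>A\<^esub> S" "a = h a'" and x': "x' \<in> carrier A" "x = h x'"
      using surj by (metis image_iff)
    have a'c: "a' \<in> carrier A" using ideal.Icarr[OF IA a'(1)] .
    have "x' \<otimes>\<^bsub>A\<^esub> a' \<in> Idl\<^bsub>A\<^esub> S" "a' \<otimes>\<^bsub>A\<^esub> x' \<in> Idl\<^bsub>A\<^esub> S"
      using IA a'(1) x'(1) by (simp_all add: ideal.I_l_closed ideal.I_r_closed)
    moreover have "h (x' \<otimes>\<^bsub>A\<^esub> a') = x \<otimes>\<^bsub>B\<^esub> a" "h (a' \<otimes>\<^bsub>A\<^esub> x') = a \<otimes>\<^bsub>B\<^esub> x"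
      using a' x' a'c by simp_all
    ultimately show "x \<otimes>\<^bsub>B\<^esub> a \<in> h ` (Idl\<^bsub>A\<^esub> S)" "a \<otimes>\<^bsub>B\<^esub> x \<in> h ` (Idl\<^bsub>A\<^esub> S)"
      by (metis image_eqI)+
  qed
  moreover have "h ` S \<subseteq> h ` (Idl\<^bsub>A\<^esub> S)" using A.genideal_self[OF S] by auto
  ultimately show "Idl\<^bsub>B\<^esub> (h ` S) \<subseteq> h ` (Idl\<^bsub>A\<^esub> S)" by (rule B.genideal_minimal)
qed

lemma genideal_image_genideal:
  assumes A: "ring A" and B: "ring B" and h: "h \<in> ring_hom A B" and S: "S \<subseteq> carrier A"
  shows "Idl\<^bsub>B\<^esub> (h ` (Idl\<^bsub>A\<^esub> S)) = Idl\<^bsub>B\<^esub> (h ` S)"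
proof -
  interpret A: ring A by fact
  interpret B: ring B by fact
  have hS: "h ` S \<subseteq> carrier B" using S ring_hom_closed[OF h] by blast
  have hI: "h ` (Idl\<^bsub>A\<^esub> S) \<subseteq> carrier B"
    using ideal.Icarr[OF A.genideal_ideal[OF S]] ring_hom_closed[OF h] by blast
  show ?thesis
  proof
    show "Idl\<^bsub>B\<^esub> (h ` (Idl\<^bsub>A\<^esub> S)) \<subseteq> Idl\<^bsub>B\<^esub> (h ` S)"
      using ring_hom_genideal_subset[OF assms] B.genideal_minimal[OF B.genideal_ideal[OF hS]]
      by blast
    show "Idl\<^bsub>B\<^esub> (h ` S) \<subseteq> Idl\<^bsub>B\<^esub> (h ` (Idl\<^bsub>A\<^esub> S))"
      using A.genideal_self[OF S] by (intro B.subset_Idl_subset[OF hI]) auto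
  qed
qed

lemma genideal_image_cgenideal:
  assumes A: "cring A" and B: "cring B" and h: "h \<in> ring_hom A B" and x: "x \<in> carrier A"
  shows "Idl\<^bsub>B\<^esub> (h ` (PIdl\<^bsub>A\<^esub> x)) = PIdl\<^bsub>B\<^esub> (h x)"
proof -
  interpret A: cring A by fact
  interpret B: cring B by fact
  have "Idl\<^bsub>B\<^esub> (h ` (PIdl\<^bsub>A\<^esub> x)) = Idl\<^bsub>B\<^esub> (h ` {x})"
    using genideal_image_genideal[OF A.ring_axioms B.ring_axioms h] x
    by (simp add: A.cgenideal_eq_genideal)
  then show ?thesis using B.cgenideal_eq_genideal[OF ring_hom_closed[OF h x]] by simp
qed

lemma cgenideal_ideal_pow:
  fixes R (structure)
  assumes R: "cring R" and a: "a \<in> carrier R"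
  shows "(PIdl\<^bsub>R\<^esub> a) [^]\<^bsub>ideals_set R\<^esub> (n::nat) = PIdl\<^bsub>R\<^esub> (a [^]\<^bsub>R\<^esub> n)"
proof (induction n)
  interpret cring R by fact
  case 0
  show ?case
    by (simp add: ideals_set_def cgenideal_eq_genideal genideal_one)
next
  interpret cring R by fact
  case (Suc n)
  have "(PIdl a) [^]\<^bsub>ideals_set R\<^esub> Suc n = ideal_prod R (PIdl (a [^] n)) (PIdl a)"
    using Suc by (simp add: ideals_set_def)
  also have "\<dots> = Idl (PIdl (a [^] n) <#> PIdl a)"
    using a by (simp add: ideal_prod_eq_genideal cgenideal_ideal)
  also have "PIdl (a [^] n) <#> PIdl a = PIdl (a [^] Suc n)"
    using a by (simp add: cgenideal_prod)
  also have "Idl (PIdl (a [^] Suc n)) = PIdl (a [^] Suc n)"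
    using a cgenideal_ideal[of "a [^] Suc n"]
    by (intro equalityI genideal_minimal genideal_self) (auto dest: ideal.Icarr)
  finally show ?case .
qed

lemma tor_cgenideal_iff:
  assumes R0: "cring R0" and A: "cring A" and h: "h \<in> ring_hom R0 A" and f: "f \<in> carrier R0"
  shows "x \<in> tor A h (PIdl\<^bsub>R0\<^esub> f) \<longleftrightarrow>
    x \<in> carrier A \<and> (\<exists>n::nat. h f [^]\<^bsub>A\<^esub> n \<otimes>\<^bsub>A\<^esub> x = \<zero>\<^bsub>A\<^esub>)"
proof
  interpret R0: cring R0 by fact
  assume "x \<in> tor A h (PIdl\<^bsub>R0\<^esub> f)"
  then show "x \<in> carrier A \<and> (\<exists>n::nat. h f [^]\<^bsub>A\<^esub> n \<otimes>\<^bsub>A\<^esub> x = \<zero>\<^bsub>A\<^esub>)"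
    using R0.cgenideal_self[OF f] unfolding tor_def by blast
next
  interpret A: cring A by fact
  interpret H: ring_hom_cring R0 A h
    by (intro ring_hom_cring.intro ring_hom_cring_axioms.intro R0 A h)
  assume x: "x \<in> carrier A \<and> (\<exists>n::nat. h f [^]\<^bsub>A\<^esub> n \<otimes>\<^bsub>A\<^esub> x = \<zero>\<^bsub>A\<^esub>)"
  then obtain n :: nat where n: "h f [^]\<^bsub>A\<^esub> n \<otimes>\<^bsub>A\<^esub> x = \<zero>\<^bsub>A\<^esub>" by blast
  have "h (r \<otimes>\<^bsub>R0\<^esub> f) [^]\<^bsub>A\<^esub> n \<otimes>\<^bsub>A\<^esub> x = \<zero>\<^bsub>A\<^esub>" if r: "r \<in> carrier R0" for r
  proof -
    have "h (r \<otimes>\<^bsub>R0\<^esub> f) [^]\<^bsub>A\<^esub> n \<otimes>\<^bsub>A\<^esub> x = h r [^]\<^bsub>A\<^esub> n \<otimes>\<^bsub>A\<^esub> (h f [^]\<^bsub>A\<^esub> n \<otimes>\<^bsub>A\<^esub> x)"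
      using r f x by (simp add: A.nat_pow_distrib A.m_assoc)
    then show ?thesis using n r by simp
  qed
  then show "x \<in> tor A h (PIdl\<^bsub>R0\<^esub> f)" using x unfolding tor_def cgenideal_def by blast
qed

lemma ring_hom_tor_cgenideal:
  assumes R0: "cring R0" and A: "cring A" and S0: "cring S0" and B: "cring B"
    and hA: "hA \<in> ring_hom R0 A" and hB: "hB \<in> ring_hom S0 B" and \<phi>: "\<phi> \<in> ring_hom A B"
    and f: "f \<in> carrier R0" and g: "g \<in> carrier S0" and fg: "\<phi> (hA f) = hB g"
    and x: "x \<in> tor A hA (PIdl\<^bsub>R0\<^esub> f)"
  shows "\<phi> x \<in> tor B hB (PIdl\<^bsub>S0\<^esub> g)"
proof -
  interpret \<Phi>: ring_hom_cring A B \<phi> by (intro ring_hom_cring.intro ring_hom_cring_axioms.intro A B \<phi>)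
  obtain n :: nat where xc: "x \<in> carrier A" and n: "hA f [^]\<^bsub>A\<^esub> n \<otimes>\<^bsub>A\<^esub> x = \<zero>\<^bsub>A\<^esub>"
    using x tor_cgenideal_iff[OF R0 A hA f] by blast
  have "hA f \<in> carrier A" using ring_hom_closed[OF hA f] .
  then have "hB g [^]\<^bsub>B\<^esub> n \<otimes>\<^bsub>B\<^esub> \<phi> x = \<zero>\<^bsub>B\<^esub>"
    using n xc fg[symmetric] by (metis \<Phi>.hom_mult \<Phi>.hom_zero \<Phi>.R.nat_pow_closed
        ring_hom_ring.hom_nat_pow \<Phi>.ring.is_ring_hom_ring)
  then show ?thesis using tor_cgenideal_iff[OF S0 B hB g] xc by blast
qed

section \<open>The binomial theorem\<close>

context cring
begin

definition binomial_term :: "'a \<Rightarrow> 'a \<Rightarrow> nat \<Rightarrow> nat \<Rightarrow> 'a" where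
  "binomial_term a b n k = add_pow R (n choose k) (a [^] k \<otimes> b [^] (n - k))"

lemma binomial_term_closed [simp]:
  "a \<in> carrier R \<Longrightarrow> b \<in> carrier R \<Longrightarrow> binomial_term a b n k \<in> carrier R"
  by (simp add: binomial_term_def)

lemma binomial_term_Pi [simp]:
  "a \<in> carrier R \<Longrightarrow> b \<in> carrier R \<Longrightarrow> binomial_term a b n \<in> A \<rightarrow> carrier R"
  by simp

lemma binomial_expansion:
  assumes a: "a \<in> carrier R" and b: "b \<in> carrier R"
  shows "(a \<oplus> b) [^] n = (\<Oplus>k\<in>{..n}. binomial_term a b n k)"
proof (induction n)
  case 0
  then show ?case using a b by (simp add: binomial_term_def)
next
  case (Suc n)
  let ?T = "binomial_term a b"
  have T0: "?T (Suc n) 0 = ?T n 0 \<otimes> b"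
    using a b by (simp add: binomial_term_def m_assoc)
  have TS: "?T (Suc n) (Suc k) = ?T n k \<otimes> a \<oplus> ?T n (Suc k) \<otimes> b" if k: "k \<le> n" for k
  proof -
    have e1: "?T n k \<otimes> a = add_pow R (n choose k) (a [^] Suc k \<otimes> b [^] (n - k))"
      using a b by (simp add: binomial_term_def add_pow_ldistr add_pow_rdistr m_ac nat_pow_Suc2)
    have e2: "?T n (Suc k) \<otimes> b = add_pow R (n choose Suc k) (a [^] Suc k \<otimes> b [^] (n - k))"
    proof (cases "k = n")
      case True
      then show ?thesis using a b by (simp add: binomial_term_def add_pow_ldistr binomial_eq_0)
    next
      case False
      then have "n - k = Suc (n - Suc k)" using k by simp
      then show ?thesis using a b by (simp add: binomial_term_def add_pow_ldistr m_assoc nat_pow_Suc)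
    qed
    show ?thesis unfolding e1 e2 using a b by (simp add: binomial_term_def add.nat_pow_mult)
  qed
  have "(a \<oplus> b) [^] Suc n = (\<Oplus>k\<in>{..n}. ?T n k \<otimes> a) \<oplus> (\<Oplus>k\<in>{..n}. ?T n k \<otimes> b)"
    using Suc a b by (simp add: r_distr finsum_ldistr)
  also have "(\<Oplus>k\<in>{..n}. ?T n k \<otimes> b) = (\<Oplus>k\<in>{..Suc n}. ?T n k \<otimes> b)"
    using a b by (simp add: binomial_term_def binomial_eq_0)
  also have "\<dots> = (\<Oplus>k\<in>{..n}. ?T n (Suc k) \<otimes> b) \<oplus> ?T n 0 \<otimes> b"
    using a b by (simp add: finsum_Suc2 del: finsum_Suc)
  also have "(\<Oplus>k\<in>{..n}. ?T n k \<otimes> a) \<oplus> ((\<Oplus>k\<in>{..n}. ?T n (Suc k) \<otimes> b) \<oplus> ?T n 0 \<otimes> b)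
      = (\<Oplus>k\<in>{..n}. ?T (Suc n) (Suc k)) \<oplus> ?T (Suc n) 0"
    using a b by (simp add: T0 TS finsum_addf a_assoc cong: finsum_cong)
  also have "\<dots> = (\<Oplus>k\<in>{..Suc n}. ?T (Suc n) k)"
    using a b by (simp add: finsum_Suc2 del: finsum_Suc)
  finally show ?case .
qed

lemma prime_pow_add:
  assumes p: "Factorial_Ring.prime (p::nat)" and a: "a \<in> carrier R" and b: "b \<in> carrier R"
  shows "\<exists>z\<in>carrier R. (a \<oplus> b) [^] p = a [^] p \<oplus> b [^] p \<oplus> add_pow R p \<one> \<otimes> z"
proof -
  obtain m where m: "p = Suc (Suc m)"
    using prime_ge_2_nat[OF p] by (metis add_2_eq_Suc le_Suc_ex)
  have "\<exists>c. (p choose Suc k) = p * c" if "k \<le> m" for k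
    using dvd_choose_prime[of "Suc k" p] that m p by (auto elim!: dvdE)
  then obtain c where c: "\<And>k. k \<le> m \<Longrightarrow> (p choose Suc k) = p * c k" by metis
  define y where "y k = add_pow R (c k) (a [^] Suc k \<otimes> b [^] (p - Suc k))" for k
  have y: "y k \<in> carrier R" for k using a b by (simp add: y_def)
  have middle: "binomial_term a b p (Suc k) = add_pow R p \<one> \<otimes> y k" if "k \<le> m" for k
  proof -
    have "add_pow R (p * c k) x = add_pow R p \<one> \<otimes> add_pow R (c k) x" if "x \<in> carrier R" for x
      using that by (simp add: add.nat_pow_pow mult.commute add_pow_ldistr)
    then show ?thesis using c[OF \<open>k \<le> m\<close>] a b by (simp add: binomial_term_def y_def)
  qed
  have "(a \<oplus> b) [^] p = (\<Oplus>k\<in>{..Suc (Suc m)}. binomial_term a b p k)"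
    using binomial_expansion[OF a b, of p] m by simp
  also have "\<dots> = binomial_term a b p (Suc (Suc m)) \<oplus> (\<Oplus>k\<in>{..Suc m}. binomial_term a b p k)"
    by (rule finsum_Suc) (use a b in simp)
  also have "(\<Oplus>k\<in>{..Suc m}. binomial_term a b p k) =
      (\<Oplus>k\<in>{..m}. binomial_term a b p (Suc k)) \<oplus> binomial_term a b p 0"
    by (rule finsum_Suc2) (use a b in simp)
  also have "(\<Oplus>k\<in>{..m}. binomial_term a b p (Suc k)) = (\<Oplus>k\<in>{..m}. add_pow R p \<one> \<otimes> y k)"
    using a b y by (intro finsum_cong) (auto simp: middle)
  also have "\<dots> = add_pow R p \<one> \<otimes> (\<Oplus>k\<in>{..m}. y k)"
    using y by (simp add: finsum_rdistr)
  also have "binomial_term a b p (Suc (Suc m)) = a [^] p" using a b m by (simp add: binomial_term_def)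
  also have "binomial_term a b p 0 = b [^] p" using a b by (simp add: binomial_term_def)
  finally have "(a \<oplus> b) [^] p = a [^] p \<oplus> b [^] p \<oplus> add_pow R p \<one> \<otimes> (\<Oplus>k\<in>{..m}. y k)"
    using a b y by (simp add: a_ac finsum_closed)
  then show ?thesis using y by (intro bexI[of _ "\<Oplus>k\<in>{..m}. y k"]) (auto simp: finsum_closed)
qed

end

section \<open>Maximal ideals and the Jacobson radical\<close>

lemma (in cring) exists_maximalideal:
  assumes I: "ideal I R" and ne: "I \<noteq> carrier R"
  shows "\<exists>M. maximalideal M R \<and> I \<subseteq> M"
proof -
  define \<A> where "\<A> = {J. ideal J R \<and> I \<subseteq> J \<and> \<one> \<notin> J}"
  have "\<one> \<notin> I" using ideal.one_imp_carrier[OF I] ne by blast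
  then have I\<A>: "I \<in> \<A>" using I by (simp add: \<A>_def)
  have "\<exists>M\<in>\<A>. \<forall>Z\<in>\<A>. M \<subseteq> Z \<longrightarrow> Z = M"
  proof (rule subset_Zorn)
    fix C assume C: "subset.chain \<A> C"
    show "\<exists>U\<in>\<A>. \<forall>Z\<in>C. Z \<subseteq> U"
    proof (cases "C = {}")
      case False
      have C\<A>: "C \<subseteq> \<A>" using C by (simp add: pred_on.chain_def)
      have "subset.chain {J. ideal J R} C" using C unfolding pred_on.chain_def \<A>_def by blast
      then have "ideal (if C = {} then {\<zero>} else \<Union>C) R" by (rule chain_Union_is_ideal)
      then have "ideal (\<Union>C) R" using False by simp
      then show ?thesis using False C\<A> by (intro bexI[of _ "\<Union>C"]) (auto simp: \<A>_def)
    qed (use I\<A> in blast)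
  qed
  then obtain M where M: "M \<in> \<A>" and Mmax: "\<forall>Z\<in>\<A>. M \<subseteq> Z \<longrightarrow> Z = M" by blast
  have "maximalideal M R"
  proof (rule maximalidealI)
    show "ideal M R" "carrier R \<noteq> M" using M by (auto simp: \<A>_def)
    fix J assume J: "ideal J R" "M \<subseteq> J" "J \<subseteq> carrier R"
    show "J = M \<or> J = carrier R"
      using ideal.one_imp_carrier[OF J(1)] Mmax J M by (cases "\<one> \<in> J") (auto simp: \<A>_def)
  qed
  then show ?thesis using M by (auto simp: \<A>_def)
qed

lemma (in cring) jacobson_imp_one_minus_Units:
  assumes x: "x \<in> jacobson R" and r: "r \<in> carrier R"
  shows "\<one> \<ominus> r \<otimes> x \<in> Units R"
proof (rule ccontr)
  define u where "u = \<one> \<ominus> r \<otimes> x"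
  assume "\<one> \<ominus> r \<otimes> x \<notin> Units R"
  then have nu: "u \<notin> Units R" by (simp add: u_def)
  have xc: "x \<in> carrier R" using x by (simp add: jacobson_def)
  then have uc: "u \<in> carrier R" using r by (simp add: u_def)
  have "PIdl u \<noteq> carrier R"
  proof
    assume "PIdl u = carrier R"
    then obtain s where "s \<in> carrier R" "\<one> = s \<otimes> u" by (auto simp: cgenideal_def)
    then have "u \<in> Units R" using uc by (auto simp: Units_def m_comm)
    then show False using nu by simp
  qed
  then obtain M where M: "maximalideal M R" "PIdl u \<subseteq> M"
    using exists_maximalideal[OF cgenideal_ideal[OF uc]] by blast
  interpret M: ideal M R using M(1) by (simp add: maximalideal_def)
  have "u \<in> M" using M(2) cgenideal_self[OF uc] by blast
  moreover have "r \<otimes> x \<in> M" using x M(1) r by (simp add: jacobson_def M.I_l_closed)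
  moreover have "u \<oplus> r \<otimes> x = \<one>" using xc r by (simp add: u_def a_minus_def a_assoc l_neg)
  ultimately have "\<one> \<in> M" by (metis M.a_closed)
  then show False using maximalideal.I_notcarr[OF M(1)] M.one_imp_carrier by simp
qed

lemma (in cring) one_minus_Units_imp_jacobson:
  assumes xc: "x \<in> carrier R" and u: "\<And>r. r \<in> carrier R \<Longrightarrow> \<one> \<ominus> r \<otimes> x \<in> Units R"
  shows "x \<in> jacobson R"
  unfolding jacobson_def
proof (intro CollectI conjI allI impI xc)
  fix M assume M: "maximalideal M R"
  interpret M: ideal M R using M by (simp add: maximalideal_def)
  show "x \<in> M"
  proof (rule ccontr)
    assume xM: "x \<notin> M"
    define J where "J = M <+>\<^bsub>R\<^esub> PIdl x"
    have J: "ideal J R" unfolding J_def by (rule add_ideals[OF M.is_ideal cgenideal_ideal[OF xc]])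
    have MJ: "M \<subseteq> J"
    proof
      fix m assume m: "m \<in> M"
      have "m \<oplus> \<zero> \<in> J" unfolding J_def set_add_def'
        using m additive_subgroup.zero_closed[OF ideal.axioms(1)[OF cgenideal_ideal[OF xc]]] by blast
      then show "m \<in> J" using m M.Icarr by simp
    qed
    have "\<zero> \<oplus> x \<in> J" unfolding J_def using cgenideal_self[OF xc] M.is_ideal
      by (auto simp: set_add_def' additive_subgroup.zero_closed ideal.axioms(1))
    then have "x \<in> J" using xc by simp
    then have "J = carrier R"
      using maximalideal.I_maximal[OF M J MJ] ideal.Icarr[OF J] xM by blast
    then have "\<one> \<in> J" by simp
    then obtain m y where my: "m \<in> M" "y \<in> PIdl x" "\<one> = m \<oplus> y"
      unfolding J_def by (auto simp: set_add_def')
    then obtain r where mr: "m \<in> M" "r \<in> carrier R" "\<one> = m \<oplus> r \<otimes> x"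
      by (auto simp: cgenideal_def)
    then have "m = \<one> \<ominus> r \<otimes> x" using M.Icarr[OF mr(1)] xc by (simp add: a_minus_def a_assoc r_neg)
    then have mu: "m \<in> Units R" using u[OF mr(2)] by simp
    then have "\<one> \<in> M" using M.I_l_closed[OF mr(1) Units_inv_closed[OF mu]] by simp
    then show False using maximalideal.I_notcarr[OF M] M.one_imp_carrier by simp
  qed
qed

section \<open>Fibre products of rings\<close>

lemma fibprod_simps [simp]:
  "carrier (fibprod A B f g) = fib_set (carrier A) (carrier B) f g"
  "monoid.mult (fibprod A B f g) x y = (fst x \<otimes>\<^bsub>A\<^esub> fst y, snd x \<otimes>\<^bsub>B\<^esub> snd y)"
  "monoid.one (fibprod A B f g) = (\<one>\<^bsub>A\<^esub>, \<one>\<^bsub>B\<^esub>)"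
  "ring.zero (fibprod A B f g) = (\<zero>\<^bsub>A\<^esub>, \<zero>\<^bsub>B\<^esub>)"
  "ring.add (fibprod A B f g) x y = (fst x \<oplus>\<^bsub>A\<^esub> fst y, snd x \<oplus>\<^bsub>B\<^esub> snd y)"
  by (simp_all add: fibprod_def)

lemma mem_fib_set_iff: "x \<in> fib_set A B f g \<longleftrightarrow> fst x \<in> A \<and> snd x \<in> B \<and> f (fst x) = g (snd x)"
  by (cases x) (simp add: fib_set_def)

locale ring_fibre_product =
  A: cring A + B: cring B + C: cring C for A B C and f g +
  assumes f_hom: "f \<in> ring_hom A C" and g_hom: "g \<in> ring_hom B C"
begin

abbreviation P where "P \<equiv> fibprod A B f g"

sublocale F: ring_hom_cring A C f
  by (intro ring_hom_cring.intro ring_hom_cring_axioms.intro A.cring_axioms C.cring_axioms f_hom)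
sublocale G: ring_hom_cring B C g
  by (intro ring_hom_cring.intro ring_hom_cring_axioms.intro B.cring_axioms C.cring_axioms g_hom)

lemma cring_fibprod: "cring P"
proof (rule cringI)
  show "abelian_group P"
  proof (rule abelian_groupI)
    fix x assume "x \<in> carrier P"
    then show "\<exists>y\<in>carrier P. y \<oplus>\<^bsub>P\<^esub> x = \<zero>\<^bsub>P\<^esub>"
      by (intro bexI[of _ "(\<ominus>\<^bsub>A\<^esub> fst x, \<ominus>\<^bsub>B\<^esub> snd x)"])
        (auto simp: mem_fib_set_iff A.l_neg B.l_neg)
  qed (auto simp: mem_fib_set_iff A.a_ac B.a_ac)
  show "comm_monoid P"
    by (rule comm_monoidI) (auto simp: mem_fib_set_iff A.m_ac B.m_ac)
qed (auto simp: mem_fib_set_iff A.l_distr B.l_distr)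

lemma fibprod_a_inv: "x \<in> carrier P \<Longrightarrow> \<ominus>\<^bsub>P\<^esub> x = (\<ominus>\<^bsub>A\<^esub> fst x, \<ominus>\<^bsub>B\<^esub> snd x)"
proof -
  interpret P: cring P by (rule cring_fibprod)
  show "x \<in> carrier P \<Longrightarrow> ?thesis"
    by (rule P.minus_equality) (auto simp: mem_fib_set_iff A.l_neg B.l_neg)
qed

lemma fibprod_minus:
  "x \<in> carrier P \<Longrightarrow> y \<in> carrier P \<Longrightarrow> x \<ominus>\<^bsub>P\<^esub> y = (fst x \<ominus>\<^bsub>A\<^esub> fst y, snd x \<ominus>\<^bsub>B\<^esub> snd y)"
  by (simp add: a_minus_def fibprod_a_inv)

lemma fibprod_nat_pow:
  "x \<in> carrier P \<Longrightarrow> x [^]\<^bsub>P\<^esub> (n::nat) = (fst x [^]\<^bsub>A\<^esub> n, snd x [^]\<^bsub>B\<^esub> n)"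
  by (induction n) auto

lemma fibprod_add_pow:
  "add_pow P (n::nat) x = (add_pow A n (fst x), add_pow B n (snd x))"
  by (induction n) (auto simp: add_pow_def)

lemma fst_ring_hom: "fst \<in> ring_hom P A"
  by (rule ring_hom_memI) (auto simp: mem_fib_set_iff)

lemma snd_ring_hom: "snd \<in> ring_hom P B"
  by (rule ring_hom_memI) (auto simp: mem_fib_set_iff)

lemma fibprod_Units:
  assumes x: "x \<in> carrier P" and x1: "fst x \<in> Units A" and x2: "snd x \<in> Units B"
  shows "x \<in> Units P"
proof -
  define y where "y = (inv\<^bsub>A\<^esub> fst x, inv\<^bsub>B\<^esub> snd x)"
  have xc: "fst x \<in> carrier A" "snd x \<in> carrier B" "f (fst x) = g (snd x)"
    using x by (auto simp: mem_fib_set_iff)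
  have "f (inv\<^bsub>A\<^esub> fst x) \<otimes>\<^bsub>C\<^esub> g (snd x) = \<one>\<^bsub>C\<^esub>"
    using x1 xc F.hom_mult[of "inv\<^bsub>A\<^esub> fst x" "fst x"] by simp
  moreover have "g (snd x) \<otimes>\<^bsub>C\<^esub> g (inv\<^bsub>B\<^esub> snd x) = \<one>\<^bsub>C\<^esub>"
    using x2 xc G.hom_mult[of "snd x" "inv\<^bsub>B\<^esub> snd x"] by simp
  ultimately have "f (inv\<^bsub>A\<^esub> fst x) = g (inv\<^bsub>B\<^esub> snd x)"
    by (rule C.inv_unique) (use x1 x2 xc in simp_all)
  then have "y \<in> carrier P" using x1 x2 by (simp add: y_def mem_fib_set_iff)
  moreover have "y \<otimes>\<^bsub>P\<^esub> x = \<one>\<^bsub>P\<^esub>" "x \<otimes>\<^bsub>P\<^esub> y = \<one>\<^bsub>P\<^esub>" using x1 x2 by (simp_all add: y_def)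
  ultimately show ?thesis using x unfolding Units_def by blast
qed

text \<open>Membership in the Jacobson radical is tested through the units \<open>1 - r x\<close>, which can be
  inverted componentwise.\<close>

lemma fibprod_jacobson:
  assumes x: "x \<in> carrier P" and x1: "fst x \<in> jacobson A" and x2: "snd x \<in> jacobson B"
  shows "x \<in> jacobson P"
proof (rule cring.one_minus_Units_imp_jacobson[OF cring_fibprod x])
  interpret P: cring P by (rule cring_fibprod)
  fix r assume r: "r \<in> carrier P"
  define u where "u = \<one>\<^bsub>P\<^esub> \<ominus>\<^bsub>P\<^esub> r \<otimes>\<^bsub>P\<^esub> x"
  have u: "u \<in> carrier P" using r x by (simp only: u_def P.minus_closed P.one_closed P.m_closed)
  have r12: "fst r \<in> carrier A" "snd r \<in> carrier B" using r by (auto simp: mem_fib_set_iff)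
  have "u = (\<one>\<^bsub>A\<^esub> \<ominus>\<^bsub>A\<^esub> fst r \<otimes>\<^bsub>A\<^esub> fst x, \<one>\<^bsub>B\<^esub> \<ominus>\<^bsub>B\<^esub> snd r \<otimes>\<^bsub>B\<^esub> snd x)"
    unfolding u_def using fibprod_minus[OF P.one_closed P.m_closed[OF r x]] by simp
  then show "u \<in> Units P"
    using fibprod_Units[OF u] A.jacobson_imp_one_minus_Units[OF x1 r12(1)]
      B.jacobson_imp_one_minus_Units[OF x2 r12(2)] by simp
qed

end

lemma tmap_ring_hom:
  assumes "\<And>i. ts i \<in> ring_hom (Rs i) (Rs (Suc i))"
  shows "tmap ts j k \<in> ring_hom (Rs j) (Rs (j + k))"
proof (induction k)
  case 0
  then show ?case by (simp add: id_ring_hom[unfolded id_def])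
next
  case (Suc k)
  then show ?case using ring_hom_trans[OF Suc assms[of "j + k"]] by (simp add: comp_def)
qed

lemma tmap_Suc_split: "tmap ts 0 (Suc k) x = tmap ts 1 k (tmap ts 0 1 x)"
  by (induction k) auto

lemma tower_mor_tmap:
  assumes mor: "tower_mor Rs ts Ss us \<alpha>" and ts: "\<And>i. ts i \<in> ring_hom (Rs i) (Rs (Suc i))"
    and x: "x \<in> carrier (Rs j)"
  shows "\<alpha> (j + k) (tmap ts j k x) = tmap us j k (\<alpha> j x)"
proof (induction k)
  case (Suc k)
  have "tmap ts j k x \<in> carrier (Rs (j + k))" using ring_hom_closed[OF tmap_ring_hom[of ts Rs, OF ts] x] .
  then show ?case using Suc mor by (simp add: tower_mor_def)
qed simp

locale ideal_tower =
  fixes p :: nat and Rs :: "nat \<Rightarrow> 'a ring" and ts :: "nat \<Rightarrow> 'a \<Rightarrow> 'a" and I0 :: "'a set"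
  assumes tower: "tower Rs ts" and ideal_I0: "ideal I0 (Rs 0)"
begin

abbreviation I0R :: "nat \<Rightarrow> 'a set" where "I0R i \<equiv> extI Rs ts 0 I0 i"

text \<open>\<open>Frob_rel i a c\<close> says that the class of \<open>c\<close> is the Frobenius projection \<open>F\<^sub>i\<close> of the
  class of \<open>a\<close>; it lets us reason about \<open>F\<^sub>i\<close> on representatives.\<close>

definition Frob_rel :: "nat \<Rightarrow> 'a \<Rightarrow> 'a \<Rightarrow> bool" where
  "Frob_rel i a c \<longleftrightarrow> ts i c \<ominus>\<^bsub>Rs (Suc i)\<^esub> a [^]\<^bsub>Rs (Suc i)\<^esub> p \<in> I0R (Suc i)"

lemma cring_Rs [simp]: "cring (Rs i)"
  using tower by (simp add: tower_def)

lemma ring_Rs [simp]: "ring (Rs i)"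
  using cring_Rs cring.axioms(1) by blast

lemma ts_hom [simp]: "ts i \<in> ring_hom (Rs i) (Rs (Suc i))"
  using tower by (simp add: tower_def)

lemma tmap_hom: "tmap ts j k \<in> ring_hom (Rs j) (Rs (j + k))"
  by (rule tmap_ring_hom) simp

lemma tmap0_hom [simp]: "tmap ts 0 i \<in> ring_hom (Rs 0) (Rs i)"
  using tmap_hom[of 0 i] by simp

lemma ts_closed [simp]: "x \<in> carrier (Rs i) \<Longrightarrow> ts i x \<in> carrier (Rs (Suc i))"
  using ring_hom_closed[OF ts_hom] .

lemma ts_zero [simp]: "ts i \<zero>\<^bsub>Rs i\<^esub> = \<zero>\<^bsub>Rs (Suc i)\<^esub>"
  using ring_hom_zero[OF ts_hom ring_Rs ring_Rs] .

lemma ts_minus: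
  "x \<in> carrier (Rs i) \<Longrightarrow> y \<in> carrier (Rs i) \<Longrightarrow>
    ts i (x \<ominus>\<^bsub>Rs i\<^esub> y) = ts i x \<ominus>\<^bsub>Rs (Suc i)\<^esub> ts i y"
  by (rule ring_hom_cring.hom_minus[OF ring_hom_cring_of[OF cring_Rs cring_Rs ts_hom]])

lemma I0_subset: "I0 \<subseteq> carrier (Rs 0)"
  using ideal.Icarr[OF ideal_I0] by blast

lemma tmap_I0_subset: "tmap ts 0 i ` I0 \<subseteq> carrier (Rs i)"
  using I0_subset ring_hom_closed[OF tmap0_hom] by blast

lemma ideal_I0R: "ideal (I0R i) (Rs i)"
  unfolding extI_def using ring.genideal_ideal[OF ring_Rs tmap_I0_subset] by simp

lemma I0R_carrier: "x \<in> I0R i \<Longrightarrow> x \<in> carrier (Rs i)"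
  using ideal.Icarr[OF ideal_I0R] .

lemma tmap_I0_mem_I0R: "a \<in> I0 \<Longrightarrow> tmap ts 0 i a \<in> I0R i"
  using ring.genideal_self[OF ring_Rs tmap_I0_subset] by (auto simp: extI_def)

lemma ts_I0R: "ts i ` I0R i \<subseteq> I0R (Suc i)"
proof -
  have "ts i ` I0R i \<subseteq> Idl\<^bsub>Rs (Suc i)\<^esub> (ts i ` tmap ts 0 i ` I0)"
    unfolding extI_def using ring_hom_genideal_subset[OF ring_Rs ring_Rs ts_hom tmap_I0_subset]
    by simp
  also have "ts i ` tmap ts 0 i ` I0 = tmap ts 0 (Suc i) ` I0" by (auto simp: image_comp)
  finally show ?thesis by (simp add: extI_def)
qed

lemma I0R_eq_cgenideal:
  assumes "f \<in> carrier (Rs 0)" "I0 = PIdl\<^bsub>Rs 0\<^esub> f"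
  shows "I0R i = PIdl\<^bsub>Rs i\<^esub> (tmap ts 0 i f)"
  unfolding extI_def using genideal_image_cgenideal[OF cring_Rs cring_Rs tmap0_hom] assms by simp

lemma Rbar_eq: "Rbar Rs ts I0 i = Rs i Quot I0R i"
  by (simp add: Rbar_def)

lemma Rbar_carrier: "carrier (Rbar Rs ts I0 i) = (\<lambda>a. I0R i +>\<^bsub>Rs i\<^esub> a) ` carrier (Rs i)"
  unfolding Rbar_eq by (rule FactRing_carrier[OF cring_Rs ideal_I0R])

lemma Rbar_coset_closed: "a \<in> carrier (Rs i) \<Longrightarrow> I0R i +>\<^bsub>Rs i\<^esub> a \<in> carrier (Rbar Rs ts I0 i)"
  unfolding Rbar_carrier by blast

lemma Rbar_zero: "\<zero>\<^bsub>Rbar Rs ts I0 i\<^esub> = I0R i +>\<^bsub>Rs i\<^esub> \<zero>\<^bsub>Rs i\<^esub>"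
  using ring.a_rcos_zero[OF ring_Rs ideal_I0R] ideal_I0R[of i]
  by (simp add: Rbar_eq FactRing_zero[OF cring_Rs ideal_I0R] additive_subgroup.zero_closed
      ideal.axioms(1))

lemma Rbar_one: "\<one>\<^bsub>Rbar Rs ts I0 i\<^esub> = I0R i +>\<^bsub>Rs i\<^esub> \<one>\<^bsub>Rs i\<^esub>"
  by (simp add: Rbar_eq FactRing_one[OF cring_Rs ideal_I0R])

lemma Rbar_mult_coset:
  "a \<in> carrier (Rs i) \<Longrightarrow> b \<in> carrier (Rs i) \<Longrightarrow>
    (I0R i +>\<^bsub>Rs i\<^esub> a) \<otimes>\<^bsub>Rbar Rs ts I0 i\<^esub> (I0R i +>\<^bsub>Rs i\<^esub> b) = I0R i +>\<^bsub>Rs i\<^esub> (a \<otimes>\<^bsub>Rs i\<^esub> b)"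
  unfolding Rbar_eq by (rule FactRing_mult_coset[OF cring_Rs ideal_I0R])

lemma Rbar_add_coset:
  "a \<in> carrier (Rs i) \<Longrightarrow> b \<in> carrier (Rs i) \<Longrightarrow>
    (I0R i +>\<^bsub>Rs i\<^esub> a) \<oplus>\<^bsub>Rbar Rs ts I0 i\<^esub> (I0R i +>\<^bsub>Rs i\<^esub> b) = I0R i +>\<^bsub>Rs i\<^esub> (a \<oplus>\<^bsub>Rs i\<^esub> b)"
  unfolding Rbar_eq by (rule FactRing_add_coset[OF cring_Rs ideal_I0R])

lemma Rbar_pow_coset:
  "a \<in> carrier (Rs i) \<Longrightarrow>
    (I0R i +>\<^bsub>Rs i\<^esub> a) [^]\<^bsub>Rbar Rs ts I0 i\<^esub> (n::nat) = I0R i +>\<^bsub>Rs i\<^esub> (a [^]\<^bsub>Rs i\<^esub> n)"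
  unfolding Rbar_eq by (rule FactRing_pow_coset[OF cring_Rs ideal_I0R])

lemma I0R_coset_eq_iff:
  "a \<in> carrier (Rs i) \<Longrightarrow> b \<in> carrier (Rs i) \<Longrightarrow>
    I0R i +>\<^bsub>Rs i\<^esub> a = I0R i +>\<^bsub>Rs i\<^esub> b \<longleftrightarrow> a \<ominus>\<^bsub>Rs i\<^esub> b \<in> I0R i"
  by (rule a_r_coset_eq_iff[OF ring_Rs ideal_I0R])

lemma tbar_coset:
  "a \<in> carrier (Rs i) \<Longrightarrow> tbar Rs ts I0 i (I0R i +>\<^bsub>Rs i\<^esub> a) = I0R (Suc i) +>\<^bsub>Rs (Suc i)\<^esub> ts i a"
  unfolding tbar_def by (rule ind_map_a_r_coset[OF ring_Rs ring_Rs ts_hom ideal_I0R ideal_I0R ts_I0R])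

lemma inj_on_tbar_iff:
  "inj_on (tbar Rs ts I0 i) (carrier (Rbar Rs ts I0 i)) \<longleftrightarrow>
    (\<forall>x\<in>carrier (Rs i). \<forall>y\<in>carrier (Rs i).
       ts i x \<ominus>\<^bsub>Rs (Suc i)\<^esub> ts i y \<in> I0R (Suc i) \<longrightarrow> x \<ominus>\<^bsub>Rs i\<^esub> y \<in> I0R i)"
  unfolding inj_on_def Rbar_carrier
  by (auto simp: tbar_coset I0R_coset_eq_iff)

lemma tbar_coset_eq_pow_iff:
  assumes a: "a \<in> carrier (Rs (Suc i))" and c: "c \<in> carrier (Rs i)"
  shows "tbar Rs ts I0 i (I0R i +>\<^bsub>Rs i\<^esub> c) =
      (I0R (Suc i) +>\<^bsub>Rs (Suc i)\<^esub> a) [^]\<^bsub>Rbar Rs ts I0 (Suc i)\<^esub> p \<longleftrightarrow> Frob_rel i a c"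
  using a c by (simp add: tbar_coset Rbar_pow_coset I0R_coset_eq_iff Frob_rel_def
      monoid.nat_pow_closed ring.is_monoid)

lemma Frob_coset_eq_iff:
  assumes inj: "inj_on (tbar Rs ts I0 i) (carrier (Rbar Rs ts I0 i))"
    and ex: "\<exists>c'\<in>carrier (Rs i). Frob_rel i a c'"
    and a: "a \<in> carrier (Rs (Suc i))" and c: "c \<in> carrier (Rs i)"
  shows "Frob p Rs ts I0 i (I0R (Suc i) +>\<^bsub>Rs (Suc i)\<^esub> a) = I0R i +>\<^bsub>Rs i\<^esub> c \<longleftrightarrow> Frob_rel i a c"
proof -
  let ?P = "\<lambda>W. W \<in> carrier (Rbar Rs ts I0 i) \<and>
    tbar Rs ts I0 i W = (I0R (Suc i) +>\<^bsub>Rs (Suc i)\<^esub> a) [^]\<^bsub>Rbar Rs ts I0 (Suc i)\<^esub> p"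
  obtain c' where c': "c' \<in> carrier (Rs i)" "Frob_rel i a c'" using ex by blast
  have P: "?P (I0R i +>\<^bsub>Rs i\<^esub> c')"
    using c' a Rbar_coset_closed tbar_coset_eq_pow_iff by blast
  have "?P W \<Longrightarrow> W = I0R i +>\<^bsub>Rs i\<^esub> c'" for W
    using P inj by (metis inj_onD)
  then have "Frob p Rs ts I0 i (I0R (Suc i) +>\<^bsub>Rs (Suc i)\<^esub> a) = I0R i +>\<^bsub>Rs i\<^esub> c'"
    unfolding Frob_def using P by (intro the_equality) blast+
  then show ?thesis
    using P inj Rbar_coset_closed[OF c] tbar_coset_eq_pow_iff[OF a c] by (metis inj_onD)
qed

lemma Frob_rel_zero_iff_pow:
  assumes a: "a \<in> carrier (Rs (Suc i))"
  shows "Frob_rel i a \<zero>\<^bsub>Rs i\<^esub> \<longleftrightarrow> a [^]\<^bsub>Rs (Suc i)\<^esub> p \<in> I0R (Suc i)"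
proof -
  interpret R: cring "Rs (Suc i)" by simp
  interpret L: ideal "I0R (Suc i)" "Rs (Suc i)" by (rule ideal_I0R)
  have "Frob_rel i a \<zero>\<^bsub>Rs i\<^esub> \<longleftrightarrow> \<ominus>\<^bsub>Rs (Suc i)\<^esub> (a [^]\<^bsub>Rs (Suc i)\<^esub> p) \<in> I0R (Suc i)"
    using a by (simp add: Frob_rel_def a_minus_def)
  also have "\<dots> \<longleftrightarrow> a [^]\<^bsub>Rs (Suc i)\<^esub> p \<in> I0R (Suc i)"
    using a by (metis L.a_inv_closed R.add.inv_inv R.nat_pow_closed)
  finally show ?thesis .
qed

lemma Frob_coset_in_a_kernel_iff:
  assumes inj: "inj_on (tbar Rs ts I0 i) (carrier (Rbar Rs ts I0 i))"
    and ex: "\<exists>c'\<in>carrier (Rs i). Frob_rel i a c'" and a: "a \<in> carrier (Rs (Suc i))"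
  shows "I0R (Suc i) +>\<^bsub>Rs (Suc i)\<^esub> a \<in> a_kernel (Rbar Rs ts I0 (Suc i)) (Rbar Rs ts I0 i)
      (Frob p Rs ts I0 i) \<longleftrightarrow> a [^]\<^bsub>Rs (Suc i)\<^esub> p \<in> I0R (Suc i)"
proof -
  interpret R: cring "Rs i" by simp
  show ?thesis
    using Frob_coset_eq_iff[OF inj ex a R.zero_closed] Frob_rel_zero_iff_pow[OF a]
      Rbar_coset_closed[OF a]
    by (simp add: a_kernel_def kernel_def Rbar_zero)
qed

lemma Frob_rel_cong:
  assumes a: "a \<in> carrier (Rs (Suc i))" and c: "c \<in> carrier (Rs i)" and c': "c' \<in> carrier (Rs i)"
    and F: "Frob_rel i a c" and cc': "c' \<ominus>\<^bsub>Rs i\<^esub> c \<in> I0R i"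
  shows "Frob_rel i a c'"
proof -
  interpret R: cring "Rs (Suc i)" by simp
  interpret L: ideal "I0R (Suc i)" "Rs (Suc i)" by (rule ideal_I0R)
  have closed: "ts i c \<in> carrier (Rs (Suc i))" "ts i c' \<in> carrier (Rs (Suc i))"
    "a [^]\<^bsub>Rs (Suc i)\<^esub> p \<in> carrier (Rs (Suc i))" using a c c' by simp_all
  have "ts i c' \<ominus>\<^bsub>Rs (Suc i)\<^esub> a [^]\<^bsub>Rs (Suc i)\<^esub> p =
      ts i (c' \<ominus>\<^bsub>Rs i\<^esub> c) \<oplus>\<^bsub>Rs (Suc i)\<^esub> (ts i c \<ominus>\<^bsub>Rs (Suc i)\<^esub> a [^]\<^bsub>Rs (Suc i)\<^esub> p)"
    unfolding ts_minus[OF c' c] using closed by algebra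
  then show ?thesis
    using F cc' ts_I0R unfolding Frob_rel_def by (metis L.a_closed image_subset_iff)
qed
lemma tilt_carrier_iff:
  "x \<in> carrier (tilt p Rs ts I0 i) \<longleftrightarrow> (\<forall>j. x j \<in> carrier (Rbar Rs ts I0 (i + j))) \<and>
    (\<forall>j. Frob p Rs ts I0 (i + j) (x (Suc j)) = x j)"
  by (simp add: tilt_def)

lemma tilt_mult_cosets:
  "(\<And>j. v j \<in> carrier (Rs (i + j))) \<Longrightarrow> (\<And>j. w j \<in> carrier (Rs (i + j))) \<Longrightarrow>
    (\<lambda>j. I0R (i + j) +>\<^bsub>Rs (i + j)\<^esub> v j) \<otimes>\<^bsub>tilt p Rs ts I0 i\<^esub> (\<lambda>j. I0R (i + j) +>\<^bsub>Rs (i + j)\<^esub> w j) =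
    (\<lambda>j. I0R (i + j) +>\<^bsub>Rs (i + j)\<^esub> (v j \<otimes>\<^bsub>Rs (i + j)\<^esub> w j))"
  by (simp add: tilt_def Rbar_mult_coset)

lemma tilt_add_cosets:
  "(\<And>j. v j \<in> carrier (Rs (i + j))) \<Longrightarrow> (\<And>j. w j \<in> carrier (Rs (i + j))) \<Longrightarrow>
    (\<lambda>j. I0R (i + j) +>\<^bsub>Rs (i + j)\<^esub> v j) \<oplus>\<^bsub>tilt p Rs ts I0 i\<^esub> (\<lambda>j. I0R (i + j) +>\<^bsub>Rs (i + j)\<^esub> w j) =
    (\<lambda>j. I0R (i + j) +>\<^bsub>Rs (i + j)\<^esub> (v j \<oplus>\<^bsub>Rs (i + j)\<^esub> w j))"
  by (simp add: tilt_def Rbar_add_coset)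

lemma tilt_one: "\<one>\<^bsub>tilt p Rs ts I0 i\<^esub> = (\<lambda>j. I0R (i + j) +>\<^bsub>Rs (i + j)\<^esub> \<one>\<^bsub>Rs (i + j)\<^esub>)"
  by (simp add: tilt_def Rbar_one)

lemma tilt_representatives:
  assumes "x \<in> carrier (tilt p Rs ts I0 i)"
  obtains w where "\<And>j. w j \<in> carrier (Rs (i + j))" "x = (\<lambda>j. I0R (i + j) +>\<^bsub>Rs (i + j)\<^esub> w j)"
proof -
  have "\<forall>j. \<exists>w. w \<in> carrier (Rs (i + j)) \<and> x j = I0R (i + j) +>\<^bsub>Rs (i + j)\<^esub> w"
    using assms unfolding tilt_carrier_iff Rbar_carrier by blast
  then obtain w where w: "\<And>j. w j \<in> carrier (Rs (i + j))" "\<And>j. x j = I0R (i + j) +>\<^bsub>Rs (i + j)\<^esub> w j"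
    by metis
  show ?thesis by (rule that[OF w(1)]) (simp add: fun_eq_iff w(2))
qed

end

section \<open>Preperfectoid towers\<close>

locale preperfectoid_tower =
  fixes p :: nat and Rs :: "nat \<Rightarrow> 'a ring" and ts :: "nat \<Rightarrow> 'a \<Rightarrow> 'a" and I0 I1 :: "'a set"
  assumes prime: "Factorial_Ring.prime p" and preperfectoid: "preperfectoid p Rs ts I0 I1"

sublocale preperfectoid_tower \<subseteq> ideal_tower p Rs ts I0
  using preperfectoid by (simp add: ideal_tower_def preperfectoid_def)

context preperfectoid_tower
begin

abbreviation I1R :: "nat \<Rightarrow> 'a set" where "I1R i \<equiv> extI Rs ts 1 I1 i"

lemma tbar_inj: "inj_on (tbar Rs ts I0 i) (carrier (Rbar Rs ts I0 i))"
  using preperfectoid by (simp add: preperfectoid_def)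

lemma I0R_of_ts_diff:
  "x \<in> carrier (Rs i) \<Longrightarrow> y \<in> carrier (Rs i) \<Longrightarrow>
    ts i x \<ominus>\<^bsub>Rs (Suc i)\<^esub> ts i y \<in> I0R (Suc i) \<Longrightarrow> x \<ominus>\<^bsub>Rs i\<^esub> y \<in> I0R i"
  using tbar_inj by (simp add: inj_on_tbar_iff)

lemma Frob_rel_ex:
  assumes a: "a \<in> carrier (Rs (Suc i))"
  shows "\<exists>c\<in>carrier (Rs i). Frob_rel i a c"
proof -
  have "(I0R (Suc i) +>\<^bsub>Rs (Suc i)\<^esub> a) [^]\<^bsub>Rbar Rs ts I0 (Suc i)\<^esub> p
      \<in> tbar Rs ts I0 i ` carrier (Rbar Rs ts I0 i)"
    using preperfectoid Rbar_coset_closed[OF a] by (simp add: preperfectoid_def)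
  then show ?thesis using tbar_coset_eq_pow_iff[OF a] unfolding Rbar_carrier by (auto simp del: tbar_def)
qed

lemma Frob_coset_eq_iff':
  "a \<in> carrier (Rs (Suc i)) \<Longrightarrow> c \<in> carrier (Rs i) \<Longrightarrow>
    Frob p Rs ts I0 i (I0R (Suc i) +>\<^bsub>Rs (Suc i)\<^esub> a) = I0R i +>\<^bsub>Rs i\<^esub> c \<longleftrightarrow> Frob_rel i a c"
  by (rule Frob_coset_eq_iff[OF tbar_inj Frob_rel_ex])

lemma Frob_rel_surj:
  assumes c: "c \<in> carrier (Rs i)"
  shows "\<exists>a\<in>carrier (Rs (Suc i)). Frob_rel i a c"
proof -
  have "I0R i +>\<^bsub>Rs i\<^esub> c \<in> Frob p Rs ts I0 i ` carrier (Rbar Rs ts I0 (Suc i))"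
    using preperfectoid Rbar_coset_closed[OF c] by (simp add: preperfectoid_def)
  then show ?thesis unfolding Rbar_carrier using Frob_coset_eq_iff' c by fastforce
qed

lemma Frob_rel_unique:
  assumes a: "a \<in> carrier (Rs (Suc i))" and c: "c \<in> carrier (Rs i)" and c': "c' \<in> carrier (Rs i)"
    and "Frob_rel i a c" "Frob_rel i a c'"
  shows "c \<ominus>\<^bsub>Rs i\<^esub> c' \<in> I0R i"
  using assms Frob_coset_eq_iff'[OF a] I0R_coset_eq_iff by metis

lemma add_pow_one_mem_I0R: "add_pow (Rs i) p \<one>\<^bsub>Rs i\<^esub> \<in> I0R i"
proof -
  interpret T: ring_hom_cring "Rs 0" "Rs i" "tmap ts 0 i"
    by (rule ring_hom_cring_of) simp_all
  have "add_pow (Rs 0) p \<one>\<^bsub>Rs 0\<^esub> \<in> I0" using preperfectoid by (simp add: preperfectoid_def)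
  moreover have "tmap ts 0 i (add_pow (Rs 0) p \<one>\<^bsub>Rs 0\<^esub>) = add_pow (Rs i) p \<one>\<^bsub>Rs i\<^esub>"
    by (simp add: T.hom_add_pow)
  ultimately show ?thesis using tmap_I0_mem_I0R by metis
qed

lemma Frob_rel_add:
  assumes a: "a \<in> carrier (Rs (Suc i))" and b: "b \<in> carrier (Rs (Suc i))"
    and c: "c \<in> carrier (Rs i)" and d: "d \<in> carrier (Rs i)"
    and Fa: "Frob_rel i a c" and Fb: "Frob_rel i b d"
  shows "Frob_rel i (a \<oplus>\<^bsub>Rs (Suc i)\<^esub> b) (c \<oplus>\<^bsub>Rs i\<^esub> d)"
proof -
  interpret S: cring "Rs (Suc i)" by simp
  interpret L: ideal "I0R (Suc i)" "Rs (Suc i)" by (rule ideal_I0R)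
  obtain z where z: "z \<in> carrier (Rs (Suc i))" and binom:
    "(a \<oplus>\<^bsub>Rs (Suc i)\<^esub> b) [^]\<^bsub>Rs (Suc i)\<^esub> p = a [^]\<^bsub>Rs (Suc i)\<^esub> p \<oplus>\<^bsub>Rs (Suc i)\<^esub>
      b [^]\<^bsub>Rs (Suc i)\<^esub> p \<oplus>\<^bsub>Rs (Suc i)\<^esub> add_pow (Rs (Suc i)) p \<one>\<^bsub>Rs (Suc i)\<^esub> \<otimes>\<^bsub>Rs (Suc i)\<^esub> z"
    using S.prime_pow_add[OF prime a b] by blast
  let ?pz = "add_pow (Rs (Suc i)) p \<one>\<^bsub>Rs (Suc i)\<^esub> \<otimes>\<^bsub>Rs (Suc i)\<^esub> z"
  have "?pz \<in> I0R (Suc i)" using L.I_r_closed[OF add_pow_one_mem_I0R z] .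
  moreover have closed: "ts i c \<in> carrier (Rs (Suc i))" "ts i d \<in> carrier (Rs (Suc i))"
    "a [^]\<^bsub>Rs (Suc i)\<^esub> p \<in> carrier (Rs (Suc i))" "b [^]\<^bsub>Rs (Suc i)\<^esub> p \<in> carrier (Rs (Suc i))"
    "?pz \<in> carrier (Rs (Suc i))" using a b c d z by simp_all
  have "ts i (c \<oplus>\<^bsub>Rs i\<^esub> d) \<ominus>\<^bsub>Rs (Suc i)\<^esub> (a \<oplus>\<^bsub>Rs (Suc i)\<^esub> b) [^]\<^bsub>Rs (Suc i)\<^esub> p =
     (ts i c \<ominus>\<^bsub>Rs (Suc i)\<^esub> a [^]\<^bsub>Rs (Suc i)\<^esub> p) \<oplus>\<^bsub>Rs (Suc i)\<^esub>
     (ts i d \<ominus>\<^bsub>Rs (Suc i)\<^esub> b [^]\<^bsub>Rs (Suc i)\<^esub> p) \<ominus>\<^bsub>Rs (Suc i)\<^esub> ?pz"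
    unfolding binom ring_hom_add[OF ts_hom c d] using closed by algebra
  ultimately show ?thesis
    using Fa Fb unfolding Frob_rel_def by (metis L.a_closed L.a_inv_closed a_minus_def)
qed

lemma ideal_I1: "ideal I1 (Rs 1)"
  using preperfectoid cring.cgenideal_ideal[OF cring_Rs] by (auto simp: preperfectoid_def)

lemma tmap_I1_subset: "tmap ts 1 i ` I1 \<subseteq> carrier (Rs (Suc i))"
  using ideal.Icarr[OF ideal_I1] ring_hom_closed[OF tmap_hom, of _ 1 i] by auto

lemma ideal_I1R: "ideal (I1R i) (Rs (Suc i))"
  unfolding extI_def using ring.genideal_ideal[OF ring_Rs tmap_I1_subset] by simp

lemma I1R_carrier: "k \<in> I1R i \<Longrightarrow> k \<in> carrier (Rs (Suc i))"
  using ideal.Icarr[OF ideal_I1R] .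

lemma I1_pow: "I1 [^]\<^bsub>ideals_set (Rs 1)\<^esub> p = I0R 1"
  using preperfectoid by (simp add: preperfectoid_def)

lemma I0R_one_eq_cgenideal_pow:
  assumes "f \<in> carrier (Rs 1)" "I1 = PIdl\<^bsub>Rs 1\<^esub> f"
  shows "I0R 1 = PIdl\<^bsub>Rs 1\<^esub> (f [^]\<^bsub>Rs 1\<^esub> p)"
  using I1_pow assms cgenideal_ideal_pow[OF cring_Rs] by simp

lemma I0R_one_subset_I1: "I0R 1 \<subseteq> I1"
proof -
  interpret R1: cring "Rs 1" by simp
  obtain f where f: "f \<in> carrier (Rs 1)" "I1 = PIdl\<^bsub>Rs 1\<^esub> f"
    using preperfectoid by (auto simp: preperfectoid_def)
  have "f [^]\<^bsub>Rs 1\<^esub> p = f [^]\<^bsub>Rs 1\<^esub> (p - 1) \<otimes>\<^bsub>Rs 1\<^esub> f"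
    using f(1) prime_gt_0_nat[OF prime] by (metis R1.nat_pow_Suc Suc_diff_1)
  then have "f [^]\<^bsub>Rs 1\<^esub> p \<in> I1"
    using f R1.nat_pow_closed[OF f(1), of "p - 1"] unfolding cgenideal_def by blast
  then show ?thesis
    using I0R_one_eq_cgenideal_pow[OF f] R1.cgenideal_minimal[OF ideal_I1] by blast
qed

lemma I0R_subset_I1R: "I0R (Suc i) \<subseteq> I1R i"
proof -
  have "tmap ts 0 (Suc i) ` I0 \<subseteq> tmap ts 1 i ` I1"
  proof
    fix y assume "y \<in> tmap ts 0 (Suc i) ` I0"
    then obtain a where a: "a \<in> I0" "y = tmap ts 1 i (tmap ts 0 1 a)"
      by (metis imageE tmap_Suc_split)
    then have "tmap ts 0 1 a \<in> I1" using tmap_I0_mem_I0R I0R_one_subset_I1 by blast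
    then show "y \<in> tmap ts 1 i ` I1" using a(2) by blast
  qed
  also have "\<dots> \<subseteq> I1R i"
    unfolding extI_def using ring.genideal_self[OF ring_Rs tmap_I1_subset] by simp
  finally show ?thesis
    unfolding extI_def[of _ _ 0] using ring.genideal_minimal[OF ring_Rs ideal_I1R] by simp
qed

lemma pow_mem_I0R_iff:
  assumes a: "a \<in> carrier (Rs (Suc i))"
  shows "a [^]\<^bsub>Rs (Suc i)\<^esub> p \<in> I0R (Suc i) \<longleftrightarrow> a \<in> I1R i"
proof -
  have "a_kernel (Rbar Rs ts I0 (Suc i)) (Rbar Rs ts I0 i) (Frob p Rs ts I0 i) =
      (\<lambda>x. I0R (Suc i) +>\<^bsub>Rs (Suc i)\<^esub> x) ` I1R i"
    using preperfectoid by (simp add: preperfectoid_def)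
  then show ?thesis
    using Frob_coset_in_a_kernel_iff[OF tbar_inj Frob_rel_ex[OF a] a]
      a_r_coset_in_image_iff[OF ring_Rs ideal_I0R ideal_I1R I0R_subset_I1R a] by simp
qed

lemma Frob_rel_zero_iff:
  "a \<in> carrier (Rs (Suc i)) \<Longrightarrow> Frob_rel i a \<zero>\<^bsub>Rs i\<^esub> \<longleftrightarrow> a \<in> I1R i"
  using Frob_rel_zero_iff_pow pow_mem_I0R_iff by simp

lemma Frob_rel_add_I1R:
  assumes b: "b \<in> carrier (Rs (Suc i))" and d: "d \<in> carrier (Rs i)" and k: "k \<in> I1R i"
    and F: "Frob_rel i b d"
  shows "Frob_rel i (b \<oplus>\<^bsub>Rs (Suc i)\<^esub> k) d"
proof -
  interpret R: cring "Rs i" by simp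
  have "Frob_rel i (b \<oplus>\<^bsub>Rs (Suc i)\<^esub> k) (d \<oplus>\<^bsub>Rs i\<^esub> \<zero>\<^bsub>Rs i\<^esub>)"
    using Frob_rel_add[OF b I1R_carrier[OF k] d R.zero_closed F] Frob_rel_zero_iff[OF I1R_carrier[OF k]] k
    by simp
  then show ?thesis using d by simp
qed

lemma Frob_rel_I1R_cong:
  assumes a: "a \<in> carrier (Rs (Suc i))" and a': "a' \<in> carrier (Rs (Suc i))" and c: "c \<in> carrier (Rs i)"
    and aa': "a' \<ominus>\<^bsub>Rs (Suc i)\<^esub> a \<in> I1R i" and F: "Frob_rel i a c"
  shows "Frob_rel i a' c"
proof -
  interpret S: cring "Rs (Suc i)" by simp
  show ?thesis using Frob_rel_add_I1R[OF a c aa' F] S.add_minus_cancel[OF a a'] by simp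
qed

lemma Frob_rel_diff_mem_I1R:
  assumes a: "a \<in> carrier (Rs (Suc i))" and b: "b \<in> carrier (Rs (Suc i))" and c: "c \<in> carrier (Rs i)"
    and Fa: "Frob_rel i a c" and Fb: "Frob_rel i b c"
  shows "a \<ominus>\<^bsub>Rs (Suc i)\<^esub> b \<in> I1R i"
proof -
  interpret S: cring "Rs (Suc i)" by simp
  interpret R: cring "Rs i" by simp
  interpret L: ideal "I0R i" "Rs i" by (rule ideal_I0R)
  have ab: "a \<ominus>\<^bsub>Rs (Suc i)\<^esub> b \<in> carrier (Rs (Suc i))" using a b by simp
  obtain e where e: "e \<in> carrier (Rs i)" "Frob_rel i (a \<ominus>\<^bsub>Rs (Suc i)\<^esub> b) e"
    using Frob_rel_ex[OF ab] by blast
  have "Frob_rel i ((a \<ominus>\<^bsub>Rs (Suc i)\<^esub> b) \<oplus>\<^bsub>Rs (Suc i)\<^esub> b) (e \<oplus>\<^bsub>Rs i\<^esub> c)"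
    by (rule Frob_rel_add[OF ab b e(1) c e(2) Fb])
  moreover have "(a \<ominus>\<^bsub>Rs (Suc i)\<^esub> b) \<oplus>\<^bsub>Rs (Suc i)\<^esub> b = a" using a b by algebra
  ultimately have "(e \<oplus>\<^bsub>Rs i\<^esub> c) \<ominus>\<^bsub>Rs i\<^esub> c \<in> I0R i"
    using Frob_rel_unique[OF a R.a_closed[OF e(1) c] c _ Fa] by simp
  moreover have "(e \<oplus>\<^bsub>Rs i\<^esub> c) \<ominus>\<^bsub>Rs i\<^esub> c = e"
    using e c by (simp add: a_minus_def R.a_assoc R.r_neg)
  ultimately have "\<zero>\<^bsub>Rs i\<^esub> \<ominus>\<^bsub>Rs i\<^esub> e \<in> I0R i" using e by (simp add: a_minus_def L.a_inv_closed)
  then have "Frob_rel i (a \<ominus>\<^bsub>Rs (Suc i)\<^esub> b) \<zero>\<^bsub>Rs i\<^esub>" using Frob_rel_cong[OF ab e(1) _ e(2)] by simp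
  then show ?thesis using Frob_rel_zero_iff[OF ab] by simp
qed

lemma coset_seq_in_tilt_iff:
  assumes w: "\<And>j. w j \<in> carrier (Rs (i + j))"
  shows "(\<lambda>j. I0R (i + j) +>\<^bsub>Rs (i + j)\<^esub> w j) \<in> carrier (tilt p Rs ts I0 i) \<longleftrightarrow>
    (\<forall>j. Frob_rel (i + j) (w (Suc j)) (w j))"
proof -
  have "w (Suc j) \<in> carrier (Rs (Suc (i + j)))" for j using w[of "Suc j"] by simp
  then show ?thesis
    unfolding tilt_carrier_iff using Rbar_coset_closed[OF w] Frob_coset_eq_iff'[OF _ w] by simp
qed

definition gen0 :: 'a where "gen0 = (SOME f. f \<in> carrier (Rs 0) \<and> I0 = PIdl\<^bsub>Rs 0\<^esub> f)"

lemma gen0: "gen0 \<in> carrier (Rs 0)" "I0 = PIdl\<^bsub>Rs 0\<^esub> gen0"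
proof -
  have "\<exists>f. f \<in> carrier (Rs 0) \<and> I0 = PIdl\<^bsub>Rs 0\<^esub> f" using preperfectoid by (auto simp: preperfectoid_def)
  from someI_ex[OF this] show "gen0 \<in> carrier (Rs 0)" "I0 = PIdl\<^bsub>Rs 0\<^esub> gen0"
    by (simp_all add: gen0_def)
qed

abbreviation gen :: "nat \<Rightarrow> 'a" where "gen i \<equiv> tmap ts 0 i gen0"

lemma gen_closed [simp]: "gen i \<in> carrier (Rs i)"
  using ring_hom_closed[OF tmap0_hom gen0(1)] .

lemma I0R_eq_cgenideal_gen: "I0R i = PIdl\<^bsub>Rs i\<^esub> (gen i)"
  by (rule I0R_eq_cgenideal[OF gen0])

lemma I0_annihilates_torR:
  "a \<in> I0 \<Longrightarrow> x \<in> torR Rs ts I0 i \<Longrightarrow> tmap ts 0 i a \<otimes>\<^bsub>Rs i\<^esub> x = \<zero>\<^bsub>Rs i\<^esub>"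
  using preperfectoid by (simp add: preperfectoid_def)

lemma torR_iff_pow:
  "x \<in> torR Rs ts I0 i \<longleftrightarrow>
    x \<in> carrier (Rs i) \<and> (\<exists>n::nat. gen i [^]\<^bsub>Rs i\<^esub> n \<otimes>\<^bsub>Rs i\<^esub> x = \<zero>\<^bsub>Rs i\<^esub>)"
  unfolding torR_def using tor_cgenideal_iff[OF cring_Rs cring_Rs tmap0_hom gen0(1), folded gen0(2)] .

text \<open>Since \<open>I\<^sub>0\<close> kills the \<open>I\<^sub>0\<close>-torsion, the torsion is the annihilator of the generator.\<close>

lemma torR_iff: "x \<in> torR Rs ts I0 i \<longleftrightarrow> x \<in> carrier (Rs i) \<and> gen i \<otimes>\<^bsub>Rs i\<^esub> x = \<zero>\<^bsub>Rs i\<^esub>"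
proof
  assume x: "x \<in> torR Rs ts I0 i"
  have "gen0 \<in> I0" using gen0 ring.cgenideal_self[OF ring_Rs gen0(1)] by simp
  then show "x \<in> carrier (Rs i) \<and> gen i \<otimes>\<^bsub>Rs i\<^esub> x = \<zero>\<^bsub>Rs i\<^esub>"
    using I0_annihilates_torR x torR_iff_pow by blast
next
  assume x: "x \<in> carrier (Rs i) \<and> gen i \<otimes>\<^bsub>Rs i\<^esub> x = \<zero>\<^bsub>Rs i\<^esub>"
  then have "gen i [^]\<^bsub>Rs i\<^esub> (1::nat) \<otimes>\<^bsub>Rs i\<^esub> x = \<zero>\<^bsub>Rs i\<^esub>"
    by (simp add: cring.axioms(1) ring.is_monoid monoid.nat_pow_eone)
  then show "x \<in> torR Rs ts I0 i" using torR_iff_pow x by blast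
qed

lemma torR_carrier: "x \<in> torR Rs ts I0 i \<Longrightarrow> x \<in> carrier (Rs i)"
  using torR_iff by blast

lemma torR_inter_I0R: "x \<in> torR Rs ts I0 i \<Longrightarrow> x \<in> I0R i \<Longrightarrow> x = \<zero>\<^bsub>Rs i\<^esub>"
proof -
  interpret R: cring "Rs i" by simp
  assume xt: "x \<in> torR Rs ts I0 i" and "x \<in> I0R i"
  then obtain r where r: "r \<in> carrier (Rs i)" "x = r \<otimes>\<^bsub>Rs i\<^esub> gen i"
    using I0R_eq_cgenideal_gen by (auto simp: cgenideal_def)
  have "gen i [^]\<^bsub>Rs i\<^esub> (2::nat) \<otimes>\<^bsub>Rs i\<^esub> r = gen i \<otimes>\<^bsub>Rs i\<^esub> x"
    using r by (simp add: numeral_2_eq_2 R.m_ac)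
  then have "gen i [^]\<^bsub>Rs i\<^esub> (2::nat) \<otimes>\<^bsub>Rs i\<^esub> r = \<zero>\<^bsub>Rs i\<^esub>" using xt torR_iff by simp
  then have "r \<in> torR Rs ts I0 i" using torR_iff_pow r by blast
  then show ?thesis using r torR_iff R.m_comm[OF r(1) gen_closed] by simp
qed

lemma torR_minus:
  "x \<in> torR Rs ts I0 i \<Longrightarrow> y \<in> torR Rs ts I0 i \<Longrightarrow> x \<ominus>\<^bsub>Rs i\<^esub> y \<in> torR Rs ts I0 i"
proof -
  interpret R: cring "Rs i" by simp
  show "x \<in> torR Rs ts I0 i \<Longrightarrow> y \<in> torR Rs ts I0 i \<Longrightarrow> ?thesis"
    unfolding torR_iff by (simp add: a_minus_def R.r_distr R.r_minus)
qed

lemma torR_eq_of_diff_mem_I0R: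
  assumes x: "x \<in> torR Rs ts I0 i" and y: "y \<in> torR Rs ts I0 i" and d: "x \<ominus>\<^bsub>Rs i\<^esub> y \<in> I0R i"
  shows "x = y"
proof -
  interpret R: cring "Rs i" by simp
  have "x \<ominus>\<^bsub>Rs i\<^esub> y = \<zero>\<^bsub>Rs i\<^esub>" by (rule torR_inter_I0R[OF torR_minus[OF x y] d])
  moreover have "x = (x \<ominus>\<^bsub>Rs i\<^esub> y) \<oplus>\<^bsub>Rs i\<^esub> y"
    using torR_carrier[OF x] torR_carrier[OF y] by algebra
  ultimately show ?thesis using torR_carrier[OF y] by simp
qed


lemma torR_mult_I0R:
  assumes x: "x \<in> torR Rs ts I0 i" and y: "y \<in> I0R i"
  shows "y \<otimes>\<^bsub>Rs i\<^esub> x = \<zero>\<^bsub>Rs i\<^esub>"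
proof -
  interpret R: cring "Rs i" by simp
  obtain t where t: "t \<in> carrier (Rs i)" "y = t \<otimes>\<^bsub>Rs i\<^esub> gen i"
    using y I0R_eq_cgenideal_gen by (auto simp: cgenideal_def)
  then show ?thesis using x torR_iff by (simp add: R.m_assoc)
qed

lemma mem_torR_of_annihilates_generator:
  assumes x: "x \<in> carrier (Rs i)" and y: "y \<in> carrier (Rs i)" and I0R: "I0R i = PIdl\<^bsub>Rs i\<^esub> y"
    and yx: "y \<otimes>\<^bsub>Rs i\<^esub> x = \<zero>\<^bsub>Rs i\<^esub>"
  shows "x \<in> torR Rs ts I0 i"
proof -
  interpret R: cring "Rs i" by simp
  have "gen i \<in> PIdl\<^bsub>Rs i\<^esub> y"
    using I0R I0R_eq_cgenideal_gen R.cgenideal_self[OF gen_closed] by simp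
  then obtain t where t: "t \<in> carrier (Rs i)" "gen i = t \<otimes>\<^bsub>Rs i\<^esub> y" by (auto simp: cgenideal_def)
  then show ?thesis using x y yx torR_iff by (simp add: R.m_assoc)
qed

definition Ftor :: "nat \<Rightarrow> 'a \<Rightarrow> 'a" where
  "Ftor i = (SOME G. bij_betw G (torR Rs ts I0 (Suc i)) (torR Rs ts I0 i) \<and>
     (\<forall>x\<in>torR Rs ts I0 (Suc i).
        I0R i +>\<^bsub>Rs i\<^esub> G x = Frob p Rs ts I0 i (I0R (Suc i) +>\<^bsub>Rs (Suc i)\<^esub> x)))"

lemma Ftor_bij: "bij_betw (Ftor i) (torR Rs ts I0 (Suc i)) (torR Rs ts I0 i)"
  and Frob_rel_Ftor: "x \<in> torR Rs ts I0 (Suc i) \<Longrightarrow> Frob_rel i x (Ftor i x)"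
proof -
  have "\<exists>G. bij_betw G (torR Rs ts I0 (Suc i)) (torR Rs ts I0 i) \<and>
     (\<forall>x\<in>torR Rs ts I0 (Suc i).
        I0R i +>\<^bsub>Rs i\<^esub> G x = Frob p Rs ts I0 i (I0R (Suc i) +>\<^bsub>Rs (Suc i)\<^esub> x))"
    using preperfectoid by (simp add: preperfectoid_def)
  from someI_ex[OF this, folded Ftor_def]
  have bij: "bij_betw (Ftor i) (torR Rs ts I0 (Suc i)) (torR Rs ts I0 i)"
    and eq: "\<And>x. x \<in> torR Rs ts I0 (Suc i) \<Longrightarrow>
      I0R i +>\<^bsub>Rs i\<^esub> Ftor i x = Frob p Rs ts I0 i (I0R (Suc i) +>\<^bsub>Rs (Suc i)\<^esub> x)"
    by blast+
  show "bij_betw (Ftor i) (torR Rs ts I0 (Suc i)) (torR Rs ts I0 i)" by (rule bij)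
  show "Frob_rel i x (Ftor i x)" if "x \<in> torR Rs ts I0 (Suc i)"
    using eq[OF that] Frob_coset_eq_iff' torR_carrier that bij_betwE[OF bij] by metis
qed

lemma Ftor_closed: "x \<in> torR Rs ts I0 (Suc i) \<Longrightarrow> Ftor i x \<in> torR Rs ts I0 i"
  using Ftor_bij bij_betwE by blast

lemma Ftor_unique:
  assumes x: "x \<in> torR Rs ts I0 (Suc i)" and y: "y \<in> torR Rs ts I0 i" and F: "Frob_rel i x y"
  shows "y = Ftor i x"
  using Frob_rel_unique[OF torR_carrier[OF x] torR_carrier[OF y] torR_carrier[OF Ftor_closed[OF x]]
      F Frob_rel_Ftor[OF x]]
  by (rule torR_eq_of_diff_mem_I0R[OF y Ftor_closed[OF x]])

end

section \<open>Fibre products of preperfectoid towers\<close>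

locale preperfectoid_fibre_product =
  fixes p :: nat
    and Rp :: "nat \<Rightarrow> 'a ring" and tp :: "nat \<Rightarrow> 'a \<Rightarrow> 'a" and I'0 I'1 :: "'a set"
    and Ss :: "nat \<Rightarrow> 'b ring" and us :: "nat \<Rightarrow> 'b \<Rightarrow> 'b" and J0 J1 :: "'b set"
    and Sp :: "nat \<Rightarrow> 'c ring" and up :: "nat \<Rightarrow> 'c \<Rightarrow> 'c" and J'0 J'1 :: "'c set"
    and psi' :: "nat \<Rightarrow> 'a \<Rightarrow> 'c" and sigma :: "nat \<Rightarrow> 'b \<Rightarrow> 'c"
    and Rs :: "nat \<Rightarrow> ('a \<times> 'b) ring" and ts :: "nat \<Rightarrow> 'a \<times> 'b \<Rightarrow> 'a \<times> 'b"
    and I0 I1 :: "('a \<times> 'b) set"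
  assumes p_prime: "Factorial_Ring.prime p"
    and R'_pre: "preperfectoid p Rp tp I'0 I'1"
    and S_pre: "preperfectoid p Ss us J0 J1"
    and S'_pre: "preperfectoid p Sp up J'0 J'1"
    and psi'_mor: "tower_mor Rp tp Sp up psi'"
    and sigma_mor: "tower_mor Ss us Sp up sigma"
    and ext0_psi': "Idl\<^bsub>Sp 0\<^esub> (psi' 0 ` I'0) = J'0"
    and ext0_sigma: "Idl\<^bsub>Sp 0\<^esub> (sigma 0 ` J0) = J'0"
    and ext1_sigma: "Idl\<^bsub>Sp 1\<^esub> (sigma 1 ` J1) = J'1"
    and sigma_surj: "\<forall>i. sigma i ` carrier (Ss i) = carrier (Sp i)"
    and Rs_def: "Rs = (\<lambda>i. fibprod (Rp i) (Ss i) (psi' i) (sigma i))"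
    and ts_def: "ts = (\<lambda>i x. (tp i (fst x), us i (snd x)))"
    and I0_def: "I0 = fib_set I'0 J0 (psi' 0) (sigma 0)"
    and gen0: "\<exists>f'0 g0. (f'0, g0) \<in> carrier (Rs 0) \<and> I0 = PIdl\<^bsub>Rs 0\<^esub> (f'0, g0) \<and>
                 PIdl\<^bsub>Rp 0\<^esub> f'0 = I'0 \<and> PIdl\<^bsub>Ss 0\<^esub> g0 = J0"
    and gen1: "\<exists>f'1 g1. (f'1, g1) \<in> carrier (Rs 1) \<and> I1 = PIdl\<^bsub>Rs 1\<^esub> (f'1, g1) \<and>
                 PIdl\<^bsub>Rp 1\<^esub> f'1 = I'1 \<and> PIdl\<^bsub>Ss 1\<^esub> g1 = J1"
    and cart0: "\<forall>i. cartesian (extI Rs ts 0 I0 i) (extI Rp tp 0 I'0 i) (extI Ss us 0 J0 i)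
                   fst snd (psi' i) (sigma i)"
    and cart1: "\<forall>i. cartesian (extI Rs ts 1 I1 i) (extI Rp tp 1 I'1 i) (extI Ss us 1 J1 i)
                   fst snd (psi' (Suc i)) (sigma (Suc i))"
    and tor_surj: "\<forall>i. \<forall>z\<in>torR Sp up J'0 i. \<exists>a\<in>torR Rp tp I'0 i. \<exists>b\<in>torR Ss us J0 i.
                   z = psi' i a \<oplus>\<^bsub>Sp i\<^esub> sigma i b"
begin

sublocale R': preperfectoid_tower p Rp tp I'0 I'1
  using p_prime R'_pre by (rule preperfectoid_tower.intro)
sublocale S: preperfectoid_tower p Ss us J0 J1
  using p_prime S_pre by (rule preperfectoid_tower.intro)
sublocale S': preperfectoid_tower p Sp up J'0 J'1
  using p_prime S'_pre by (rule preperfectoid_tower.intro)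

lemma psi'_hom [simp]: "psi' i \<in> ring_hom (Rp i) (Sp i)"
  using psi'_mor by (simp add: tower_mor_def)

lemma sigma_hom [simp]: "sigma i \<in> ring_hom (Ss i) (Sp i)"
  using sigma_mor by (simp add: tower_mor_def)

lemma psi'_closed [simp]: "a \<in> carrier (Rp i) \<Longrightarrow> psi' i a \<in> carrier (Sp i)"
  using ring_hom_closed[OF psi'_hom] .

lemma sigma_closed [simp]: "b \<in> carrier (Ss i) \<Longrightarrow> sigma i b \<in> carrier (Sp i)"
  using ring_hom_closed[OF sigma_hom] .

lemma ring_hom_cring_psi': "ring_hom_cring (Rp i) (Sp i) (psi' i)"
  by (rule ring_hom_cring_of) simp_all

lemma ring_hom_cring_sigma: "ring_hom_cring (Ss i) (Sp i) (sigma i)"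
  by (rule ring_hom_cring_of) simp_all

lemma psi'_tp: "a \<in> carrier (Rp i) \<Longrightarrow> psi' (Suc i) (tp i a) = up i (psi' i a)"
  using psi'_mor by (simp add: tower_mor_def)

lemma sigma_us: "b \<in> carrier (Ss i) \<Longrightarrow> sigma (Suc i) (us i b) = up i (sigma i b)"
  using sigma_mor by (simp add: tower_mor_def)

lemma psi'_tmap: "a \<in> carrier (Rp j) \<Longrightarrow> psi' (j + k) (tmap tp j k a) = tmap up j k (psi' j a)"
  by (rule tower_mor_tmap[OF psi'_mor]) simp_all

lemma sigma_tmap: "b \<in> carrier (Ss j) \<Longrightarrow> sigma (j + k) (tmap us j k b) = tmap up j k (sigma j b)"
  by (rule tower_mor_tmap[OF sigma_mor]) simp_all

lemma ring_fibre_product_Rs: "ring_fibre_product (Rp i) (Ss i) (Sp i) (psi' i) (sigma i)"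
  by (simp add: ring_fibre_product_def ring_fibre_product_axioms_def)

lemma Rs_eq: "fibprod (Rp i) (Ss i) (psi' i) (sigma i) = Rs i"
  by (simp add: Rs_def)

lemmas cring_Rs = ring_fibre_product.cring_fibprod[OF ring_fibre_product_Rs, unfolded Rs_eq]
  and Rs_minus = ring_fibre_product.fibprod_minus[OF ring_fibre_product_Rs, unfolded Rs_eq]
  and Rs_nat_pow = ring_fibre_product.fibprod_nat_pow[OF ring_fibre_product_Rs, unfolded Rs_eq]
  and Rs_add_pow = ring_fibre_product.fibprod_add_pow[OF ring_fibre_product_Rs, unfolded Rs_eq]
  and fst_hom = ring_fibre_product.fst_ring_hom[OF ring_fibre_product_Rs, unfolded Rs_eq]
  and snd_hom = ring_fibre_product.snd_ring_hom[OF ring_fibre_product_Rs, unfolded Rs_eq]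
  and jacobson_Rs = ring_fibre_product.fibprod_jacobson[OF ring_fibre_product_Rs, unfolded Rs_eq]

lemma carrier_Rs_iff:
  "x \<in> carrier (Rs i) \<longleftrightarrow>
    fst x \<in> carrier (Rp i) \<and> snd x \<in> carrier (Ss i) \<and> psi' i (fst x) = sigma i (snd x)"
  by (simp add: Rs_def mem_fib_set_iff)

lemma Rs_ops [simp]:
  "x \<otimes>\<^bsub>Rs i\<^esub> y = (fst x \<otimes>\<^bsub>Rp i\<^esub> fst y, snd x \<otimes>\<^bsub>Ss i\<^esub> snd y)"
  "x \<oplus>\<^bsub>Rs i\<^esub> y = (fst x \<oplus>\<^bsub>Rp i\<^esub> fst y, snd x \<oplus>\<^bsub>Ss i\<^esub> snd y)"
  "\<one>\<^bsub>Rs i\<^esub> = (\<one>\<^bsub>Rp i\<^esub>, \<one>\<^bsub>Ss i\<^esub>)"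
  "\<zero>\<^bsub>Rs i\<^esub> = (\<zero>\<^bsub>Rp i\<^esub>, \<zero>\<^bsub>Ss i\<^esub>)"
  by (simp_all add: Rs_def)

lemma ts_apply: "ts i x = (tp i (fst x), us i (snd x))"
  by (simp add: ts_def)

lemma ts_hom: "ts i \<in> ring_hom (Rs i) (Rs (Suc i))"
proof -
  interpret A: ring_hom_cring "Rp i" "Rp (Suc i)" "tp i" by (rule ring_hom_cring_of) simp_all
  interpret B: ring_hom_cring "Ss i" "Ss (Suc i)" "us i" by (rule ring_hom_cring_of) simp_all
  show ?thesis
    by (rule ring_hom_memI) (auto simp: carrier_Rs_iff ts_apply psi'_tp sigma_us)
qed

lemma ideal_I0: "ideal I0 (Rs 0)"
  using gen0 cring.cgenideal_ideal[OF cring_Rs] by blast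

sublocale R: ideal_tower p Rs ts I0
  using cring_Rs ts_hom ideal_I0 by (simp add: ideal_tower_def tower_def)

lemma tmap_ts: "tmap ts j k x = (tmap tp j k (fst x), tmap us j k (snd x))"
  by (induction k) (auto simp: ts_apply)

lemma I0R_Rs_eq: "R.I0R i = fib_set (R'.I0R i) (S.I0R i) (psi' i) (sigma i)"
  using cart0 by (simp add: cartesian_def bij_betw_def)

lemma I1R_Rs_eq: "extI Rs ts 1 I1 i = fib_set (R'.I1R i) (S.I1R i) (psi' (Suc i)) (sigma (Suc i))"
  using cart1 by (simp add: cartesian_def bij_betw_def)

lemma mem_I0R_Rs_iff: "x \<in> R.I0R i \<longleftrightarrow> x \<in> carrier (Rs i) \<and> fst x \<in> R'.I0R i \<and> snd x \<in> S.I0R i"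
  unfolding I0R_Rs_eq by (auto simp: mem_fib_set_iff carrier_Rs_iff R'.I0R_carrier S.I0R_carrier)

lemma mem_I1R_Rs_iff:
  "x \<in> extI Rs ts 1 I1 i \<longleftrightarrow> x \<in> carrier (Rs (Suc i)) \<and> fst x \<in> R'.I1R i \<and> snd x \<in> S.I1R i"
  unfolding I1R_Rs_eq by (auto simp: mem_fib_set_iff carrier_Rs_iff R'.I1R_carrier S.I1R_carrier)

lemma sigma_extI:
  assumes A: "A \<subseteq> carrier (Ss j)"
  shows "sigma (j + k) ` extI Ss us j A k = extI Sp up j (Idl\<^bsub>Sp j\<^esub> (sigma j ` A)) k"
proof -
  have A': "tmap us j k ` A \<subseteq> carrier (Ss (j + k))" using A ring_hom_closed[OF S.tmap_hom] by blast
  have gA: "sigma j ` A \<subseteq> carrier (Sp j)" using A by auto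
  have "sigma (j + k) ` extI Ss us j A k = Idl\<^bsub>Sp (j + k)\<^esub> (sigma (j + k) ` tmap us j k ` A)"
    unfolding extI_def using sigma_surj by (intro ring_hom_genideal_surj[OF S.ring_Rs S'.ring_Rs sigma_hom A']) blast
  also have "sigma (j + k) ` tmap us j k ` A = tmap up j k ` sigma j ` A"
    using A by (force simp: image_image sigma_tmap)
  also have "Idl\<^bsub>Sp (j + k)\<^esub> (tmap up j k ` sigma j ` A) =
      Idl\<^bsub>Sp (j + k)\<^esub> (tmap up j k ` (Idl\<^bsub>Sp j\<^esub> (sigma j ` A)))"
    using genideal_image_genideal[OF S'.ring_Rs S'.ring_Rs S'.tmap_hom gA] by simp
  finally show ?thesis unfolding extI_def .
qed

lemma psi'_extI_subset:
  assumes A: "A \<subseteq> carrier (Rp j)" and B: "B \<subseteq> carrier (Sp j)" and AB: "psi' j ` A \<subseteq> B"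
  shows "psi' (j + k) ` extI Rp tp j A k \<subseteq> extI Sp up j B k"
proof -
  have A': "tmap tp j k ` A \<subseteq> carrier (Rp (j + k))" using A ring_hom_closed[OF R'.tmap_hom] by blast
  have B': "tmap up j k ` B \<subseteq> carrier (Sp (j + k))" using B ring_hom_closed[OF S'.tmap_hom] by blast
  have "psi' (j + k) ` extI Rp tp j A k \<subseteq> Idl\<^bsub>Sp (j + k)\<^esub> (psi' (j + k) ` tmap tp j k ` A)"
    unfolding extI_def by (rule ring_hom_genideal_subset[OF R'.ring_Rs S'.ring_Rs psi'_hom A'])
  also have "psi' (j + k) ` tmap tp j k ` A = tmap up j k ` psi' j ` A"
    using A by (force simp: image_image psi'_tmap)
  also have "Idl\<^bsub>Sp (j + k)\<^esub> (tmap up j k ` psi' j ` A) \<subseteq> Idl\<^bsub>Sp (j + k)\<^esub> (tmap up j k ` B)"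
    using AB by (intro ring.subset_Idl_subset[OF S'.ring_Rs B']) blast
  finally show ?thesis unfolding extI_def .
qed

lemma S'_I0R_eq: "S'.I0R i = sigma i ` S.I0R i"
  using sigma_extI[OF S.I0_subset, of i] ext0_sigma by simp

lemma psi'_I0R: "psi' i ` R'.I0R i \<subseteq> S'.I0R i"
proof -
  have "psi' 0 ` I'0 \<subseteq> carrier (Sp 0)" using R'.I0_subset by auto
  then have "psi' 0 ` I'0 \<subseteq> J'0" using ring.genideal_self[OF S'.ring_Rs] ext0_psi' by blast
  then show ?thesis using psi'_extI_subset[OF R'.I0_subset S'.I0_subset, of i] by simp
qed

lemma S'_I1R_eq: "S'.I1R i = sigma (Suc i) ` S.I1R i"
  using sigma_extI[of J1 1 i] ideal.Icarr[OF S.ideal_I1] ext1_sigma by auto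

lemma lift_to_Rs:
  assumes a: "a \<in> carrier (Rp i)" and b: "b \<in> carrier (Ss i)"
    and ab: "psi' i a \<ominus>\<^bsub>Sp i\<^esub> sigma i b \<in> S'.I0R i"
  shows "\<exists>b'. (a, b') \<in> carrier (Rs i) \<and> b' \<ominus>\<^bsub>Ss i\<^esub> b \<in> S.I0R i"
proof -
  interpret B: cring "Ss i" by simp
  interpret C: cring "Sp i" by simp
  interpret G: ring_hom_cring "Ss i" "Sp i" "sigma i" by (rule ring_hom_cring_sigma)
  obtain e where e: "e \<in> S.I0R i" "sigma i e = psi' i a \<ominus>\<^bsub>Sp i\<^esub> sigma i b"
    using ab S'_I0R_eq by auto
  have ec: "e \<in> carrier (Ss i)" using S.I0R_carrier[OF e(1)] .
  have "sigma i (b \<oplus>\<^bsub>Ss i\<^esub> e) = psi' i a" using a b ec e(2) by (simp add: C.add_minus_cancel)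
  moreover have "(b \<oplus>\<^bsub>Ss i\<^esub> e) \<ominus>\<^bsub>Ss i\<^esub> b = e" using b ec by (rule B.add_minus_cancel_left)
  ultimately show ?thesis using a b ec e(1) by (intro exI[of _ "b \<oplus>\<^bsub>Ss i\<^esub> e"]) (simp add: carrier_Rs_iff)
qed

subsection \<open>Frobenius projections are computed componentwise\<close>

lemma psi'_Frob_rel:
  assumes a: "a \<in> carrier (Rp (Suc i))" and c: "c \<in> carrier (Rp i)" and F: "R'.Frob_rel i a c"
  shows "S'.Frob_rel i (psi' (Suc i) a) (psi' i c)"
proof -
  interpret F: ring_hom_cring "Rp (Suc i)" "Sp (Suc i)" "psi' (Suc i)" by (rule ring_hom_cring_psi')
  have "psi' (Suc i) (tp i c \<ominus>\<^bsub>Rp (Suc i)\<^esub> a [^]\<^bsub>Rp (Suc i)\<^esub> p) \<in> S'.I0R (Suc i)"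
    using F psi'_I0R unfolding R'.Frob_rel_def by blast
  then show ?thesis
    using a c by (simp add: S'.Frob_rel_def F.hom_minus psi'_tp ring_hom_ring.hom_nat_pow F.ring.is_ring_hom_ring)
qed

lemma sigma_Frob_rel:
  assumes b: "b \<in> carrier (Ss (Suc i))" and d: "d \<in> carrier (Ss i)" and F: "S.Frob_rel i b d"
  shows "S'.Frob_rel i (sigma (Suc i) b) (sigma i d)"
proof -
  interpret G: ring_hom_cring "Ss (Suc i)" "Sp (Suc i)" "sigma (Suc i)" by (rule ring_hom_cring_sigma)
  have "sigma (Suc i) (us i d \<ominus>\<^bsub>Ss (Suc i)\<^esub> b [^]\<^bsub>Ss (Suc i)\<^esub> p) \<in> S'.I0R (Suc i)"
    using F S'_I0R_eq unfolding S.Frob_rel_def by blast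
  then show ?thesis
    using b d by (simp add: S'.Frob_rel_def G.hom_minus sigma_us ring_hom_ring.hom_nat_pow G.ring.is_ring_hom_ring)
qed

lemma Frob_rel_Rs_iff:
  assumes x: "x \<in> carrier (Rs (Suc i))" and w: "w \<in> carrier (Rs i)"
  shows "R.Frob_rel i x w \<longleftrightarrow> R'.Frob_rel i (fst x) (fst w) \<and> S.Frob_rel i (snd x) (snd w)"
proof -
  interpret R: cring "Rs (Suc i)" by (rule cring_Rs)
  have closed: "ts i w \<in> carrier (Rs (Suc i))" "x [^]\<^bsub>Rs (Suc i)\<^esub> p \<in> carrier (Rs (Suc i))"
    using w x ring_hom_closed[OF ts_hom] by simp_all
  have "ts i w \<ominus>\<^bsub>Rs (Suc i)\<^esub> x [^]\<^bsub>Rs (Suc i)\<^esub> p =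
      (tp i (fst w) \<ominus>\<^bsub>Rp (Suc i)\<^esub> fst x [^]\<^bsub>Rp (Suc i)\<^esub> p,
       us i (snd w) \<ominus>\<^bsub>Ss (Suc i)\<^esub> snd x [^]\<^bsub>Ss (Suc i)\<^esub> p)"
    using Rs_minus[OF closed] Rs_nat_pow[OF x] by (simp add: ts_apply)
  then show ?thesis
    using R.minus_closed[OF closed]
    by (simp add: R.Frob_rel_def R'.Frob_rel_def S.Frob_rel_def mem_I0R_Rs_iff)
qed

lemma tbar_Rs_inj: "inj_on (tbar Rs ts I0 i) (carrier (Rbar Rs ts I0 i))"
  unfolding R.inj_on_tbar_iff
proof (intro ballI impI)
  interpret R: cring "Rs i" by (rule cring_Rs)
  interpret R1: cring "Rs (Suc i)" by (rule cring_Rs)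
  fix x y assume x: "x \<in> carrier (Rs i)" and y: "y \<in> carrier (Rs i)"
    and "ts i x \<ominus>\<^bsub>Rs (Suc i)\<^esub> ts i y \<in> R.I0R (Suc i)"
  then have "tp i (fst x) \<ominus>\<^bsub>Rp (Suc i)\<^esub> tp i (fst y) \<in> R'.I0R (Suc i)"
    "us i (snd x) \<ominus>\<^bsub>Ss (Suc i)\<^esub> us i (snd y) \<in> S.I0R (Suc i)"
    using Rs_minus[OF ring_hom_closed[OF ts_hom x] ring_hom_closed[OF ts_hom y]]
    by (simp_all add: mem_I0R_Rs_iff ts_apply)
  then show "x \<ominus>\<^bsub>Rs i\<^esub> y \<in> R.I0R i"
    using x y R'.I0R_of_ts_diff S.I0R_of_ts_diff R.minus_closed[OF x y] Rs_minus[OF x y]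
    by (simp add: mem_I0R_Rs_iff carrier_Rs_iff)
qed

lemma Frob_rel_Rs_ex:
  assumes x: "x \<in> carrier (Rs (Suc i))"
  shows "\<exists>w\<in>carrier (Rs i). R.Frob_rel i x w"
proof -
  have a: "fst x \<in> carrier (Rp (Suc i))" and b: "snd x \<in> carrier (Ss (Suc i))"
    and ab: "psi' (Suc i) (fst x) = sigma (Suc i) (snd x)" using x by (simp_all add: carrier_Rs_iff)
  obtain c where c: "c \<in> carrier (Rp i)" "R'.Frob_rel i (fst x) c" using R'.Frob_rel_ex[OF a] by blast
  obtain d where d: "d \<in> carrier (Ss i)" "S.Frob_rel i (snd x) d" using S.Frob_rel_ex[OF b] by blast
  have "S'.Frob_rel i (psi' (Suc i) (fst x)) (psi' i c)" by (rule psi'_Frob_rel[OF a c])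
  moreover have "S'.Frob_rel i (psi' (Suc i) (fst x)) (sigma i d)" using sigma_Frob_rel[OF b d] ab by simp
  ultimately have "psi' i c \<ominus>\<^bsub>Sp i\<^esub> sigma i d \<in> S'.I0R i"
    by (rule S'.Frob_rel_unique[OF psi'_closed[OF a] psi'_closed[OF c(1)] sigma_closed[OF d(1)]])
  then obtain d' where d': "(c, d') \<in> carrier (Rs i)" "d' \<ominus>\<^bsub>Ss i\<^esub> d \<in> S.I0R i"
    using lift_to_Rs c d by blast
  then have "S.Frob_rel i (snd x) d'" using S.Frob_rel_cong[OF b d(1) _ d(2)] by (simp add: carrier_Rs_iff)
  then show ?thesis using d' c x Frob_rel_Rs_iff by (intro bexI[of _ "(c, d')"]) simp_all
qed

lemma Frob_coset_Rs_eq_iff: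
  "x \<in> carrier (Rs (Suc i)) \<Longrightarrow> w \<in> carrier (Rs i) \<Longrightarrow>
    Frob p Rs ts I0 i (R.I0R (Suc i) +>\<^bsub>Rs (Suc i)\<^esub> x) = R.I0R i +>\<^bsub>Rs i\<^esub> w \<longleftrightarrow>
    R'.Frob_rel i (fst x) (fst w) \<and> S.Frob_rel i (snd x) (snd w)"
  using R.Frob_coset_eq_iff[OF tbar_Rs_inj Frob_rel_Rs_ex] Frob_rel_Rs_iff by simp


lemma add_pow_one_mem_I0: "add_pow (Rs 0) p \<one>\<^bsub>Rs 0\<^esub> \<in> I0"
proof -
  interpret F: ring_hom_cring "Rp 0" "Sp 0" "psi' 0" by (rule ring_hom_cring_psi')
  interpret G: ring_hom_cring "Ss 0" "Sp 0" "sigma 0" by (rule ring_hom_cring_sigma)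
  have "add_pow (Rp 0) p \<one>\<^bsub>Rp 0\<^esub> \<in> I'0" "add_pow (Ss 0) p \<one>\<^bsub>Ss 0\<^esub> \<in> J0"
    using R'_pre S_pre by (simp_all add: preperfectoid_def)
  then show ?thesis by (simp add: I0_def mem_fib_set_iff Rs_add_pow F.hom_add_pow G.hom_add_pow)
qed

lemma Frob_pow_in_tbar_image:
  assumes Y: "Y \<in> carrier (Rbar Rs ts I0 (Suc i))"
  shows "Y [^]\<^bsub>Rbar Rs ts I0 (Suc i)\<^esub> p \<in> tbar Rs ts I0 i ` carrier (Rbar Rs ts I0 i)"
proof -
  obtain x where x: "x \<in> carrier (Rs (Suc i))" "Y = R.I0R (Suc i) +>\<^bsub>Rs (Suc i)\<^esub> x"
    using Y R.Rbar_carrier by auto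
  obtain w where w: "w \<in> carrier (Rs i)" "R.Frob_rel i x w" using Frob_rel_Rs_ex[OF x(1)] by blast
  then have "tbar Rs ts I0 i (R.I0R i +>\<^bsub>Rs i\<^esub> w) = Y [^]\<^bsub>Rbar Rs ts I0 (Suc i)\<^esub> p"
    using R.tbar_coset_eq_pow_iff[OF x(1) w(1)] x(2) by simp
  then show ?thesis using R.Rbar_coset_closed[OF w(1)] by (metis image_eqI)
qed

text \<open>Surjectivity of \<open>F\<^sub>i\<close>: lift both components, then correct the \<open>S\<close>-component by an element
  of \<open>J\<^sub>1 S\<^sub>i\<^sub>+\<^sub>1\<close> (which \<open>F\<^sub>i\<close> kills) so that it matches the \<open>R'\<close>-component in \<open>S'\<close>.\<close>

lemma Frob_Rs_surj: "Frob p Rs ts I0 i ` carrier (Rbar Rs ts I0 (Suc i)) = carrier (Rbar Rs ts I0 i)"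
proof (intro equalityI subsetI)
  fix W assume "W \<in> Frob p Rs ts I0 i ` carrier (Rbar Rs ts I0 (Suc i))"
  then obtain x where x: "x \<in> carrier (Rs (Suc i))" "W = Frob p Rs ts I0 i (R.I0R (Suc i) +>\<^bsub>Rs (Suc i)\<^esub> x)"
    using R.Rbar_carrier by auto
  obtain w where w: "w \<in> carrier (Rs i)" "R.Frob_rel i x w" using Frob_rel_Rs_ex[OF x(1)] by blast
  then have "W = R.I0R i +>\<^bsub>Rs i\<^esub> w"
    using R.Frob_coset_eq_iff[OF tbar_Rs_inj Frob_rel_Rs_ex[OF x(1)] x(1) w(1)] x(2) by simp
  then show "W \<in> carrier (Rbar Rs ts I0 i)" using R.Rbar_coset_closed[OF w(1)] by simp
next
  interpret C: cring "Sp (Suc i)" by simp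
  interpret G: ring_hom_cring "Ss (Suc i)" "Sp (Suc i)" "sigma (Suc i)" by (rule ring_hom_cring_sigma)
  fix W assume "W \<in> carrier (Rbar Rs ts I0 i)"
  then obtain w where w: "w \<in> carrier (Rs i)" "W = R.I0R i +>\<^bsub>Rs i\<^esub> w" using R.Rbar_carrier by auto
  have c: "fst w \<in> carrier (Rp i)" and d: "snd w \<in> carrier (Ss i)"
    and cd: "psi' i (fst w) = sigma i (snd w)" using w(1) by (simp_all add: carrier_Rs_iff)
  obtain a where a: "a \<in> carrier (Rp (Suc i))" "R'.Frob_rel i a (fst w)" using R'.Frob_rel_surj[OF c] by blast
  obtain b where b: "b \<in> carrier (Ss (Suc i))" "S.Frob_rel i b (snd w)" using S.Frob_rel_surj[OF d] by blast
  have "S'.Frob_rel i (psi' (Suc i) a) (sigma i (snd w))" using psi'_Frob_rel[OF a(1) c a(2)] cd by simp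
  then have "psi' (Suc i) a \<ominus>\<^bsub>Sp (Suc i)\<^esub> sigma (Suc i) b \<in> S'.I1R i"
    using S'.Frob_rel_diff_mem_I1R[OF psi'_closed[OF a(1)] sigma_closed[OF b(1)] sigma_closed[OF d]]
      sigma_Frob_rel[OF b(1) d b(2)] by blast
  then obtain e where e: "e \<in> S.I1R i" "sigma (Suc i) e = psi' (Suc i) a \<ominus>\<^bsub>Sp (Suc i)\<^esub> sigma (Suc i) b"
    using S'_I1R_eq by auto
  have ec: "e \<in> carrier (Ss (Suc i))" using S.I1R_carrier[OF e(1)] .
  have "(a, b \<oplus>\<^bsub>Ss (Suc i)\<^esub> e) \<in> carrier (Rs (Suc i))"
    using a(1) b(1) ec e(2) by (simp add: carrier_Rs_iff C.add_minus_cancel)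
  moreover have "S.Frob_rel i (b \<oplus>\<^bsub>Ss (Suc i)\<^esub> e) (snd w)" by (rule S.Frob_rel_add_I1R[OF b(1) d e(1) b(2)])
  ultimately have "Frob p Rs ts I0 i (R.I0R (Suc i) +>\<^bsub>Rs (Suc i)\<^esub> (a, b \<oplus>\<^bsub>Ss (Suc i)\<^esub> e)) = W"
    using Frob_coset_Rs_eq_iff w a(2) by simp
  then show "W \<in> Frob p Rs ts I0 i ` carrier (Rbar Rs ts I0 (Suc i))"
    using R.Rbar_coset_closed[OF \<open>(a, b \<oplus>\<^bsub>Ss (Suc i)\<^esub> e) \<in> carrier (Rs (Suc i))\<close>] by blast
qed

lemma ideal_I1R_Rs: "ideal (extI Rs ts 1 I1 i) (Rs (Suc i))"
proof -
  have "I1 \<subseteq> carrier (Rs 1)" using gen1 ideal.Icarr[OF cring.cgenideal_ideal[OF cring_Rs]] by blast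
  then have "tmap ts 1 i ` I1 \<subseteq> carrier (Rs (Suc i))" using ring_hom_closed[OF R.tmap_hom, of _ 1 i] by auto
  then show ?thesis unfolding extI_def using ring.genideal_ideal[OF R.ring_Rs] by simp
qed

lemma I0R_Rs_subset_I1R_Rs: "R.I0R (Suc i) \<subseteq> extI Rs ts 1 I1 i"
  unfolding mem_I1R_Rs_iff subset_iff using R'.I0R_subset_I1R S.I0R_subset_I1R mem_I0R_Rs_iff by blast

lemma pow_mem_I0R_Rs_iff:
  assumes x: "x \<in> carrier (Rs (Suc i))"
  shows "x [^]\<^bsub>Rs (Suc i)\<^esub> p \<in> R.I0R (Suc i) \<longleftrightarrow> x \<in> extI Rs ts 1 I1 i"
proof -
  interpret R: cring "Rs (Suc i)" by (rule cring_Rs)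
  have "fst x \<in> carrier (Rp (Suc i))" "snd x \<in> carrier (Ss (Suc i))" using x by (simp_all add: carrier_Rs_iff)
  then show ?thesis
    unfolding mem_I1R_Rs_iff mem_I0R_Rs_iff
    using x R.nat_pow_closed[OF x] R'.pow_mem_I0R_iff S.pow_mem_I0R_iff by (simp add: Rs_nat_pow)
qed

lemma a_kernel_Frob_Rs:
  "a_kernel (Rbar Rs ts I0 (Suc i)) (Rbar Rs ts I0 i) (Frob p Rs ts I0 i) =
    (\<lambda>x. R.I0R (Suc i) +>\<^bsub>Rs (Suc i)\<^esub> x) ` extI Rs ts 1 I1 i"
proof -
  have "Y \<in> a_kernel (Rbar Rs ts I0 (Suc i)) (Rbar Rs ts I0 i) (Frob p Rs ts I0 i) \<longleftrightarrow>
      Y \<in> (\<lambda>x. R.I0R (Suc i) +>\<^bsub>Rs (Suc i)\<^esub> x) ` extI Rs ts 1 I1 i" for Y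
  proof (cases "Y \<in> carrier (Rbar Rs ts I0 (Suc i))")
    case True
    then obtain x where x: "x \<in> carrier (Rs (Suc i))" "Y = R.I0R (Suc i) +>\<^bsub>Rs (Suc i)\<^esub> x"
      using R.Rbar_carrier by auto
    show ?thesis
      using R.Frob_coset_in_a_kernel_iff[OF tbar_Rs_inj Frob_rel_Rs_ex[OF x(1)] x(1)]
        pow_mem_I0R_Rs_iff[OF x(1)] x(2)
        a_r_coset_in_image_iff[OF R.ring_Rs R.ideal_I0R ideal_I1R_Rs I0R_Rs_subset_I1R_Rs x(1)]
      by simp
  next
    case False
    moreover have "(\<lambda>x. R.I0R (Suc i) +>\<^bsub>Rs (Suc i)\<^esub> x) ` extI Rs ts 1 I1 i
        \<subseteq> carrier (Rbar Rs ts I0 (Suc i))"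
      using R.Rbar_coset_closed ideal.Icarr[OF ideal_I1R_Rs] by blast
    ultimately show ?thesis by (auto simp: a_kernel_def kernel_def)
  qed
  then show ?thesis by blast
qed

text \<open>Here the torsion hypothesis enters: \<open>\<psi>'(r) - \<sigma>(s)\<close> is killed by the generator of
  \<open>J'\<^sub>0 S'\<^sub>i\<close>, so it is a sum of images of torsion elements of \<open>R'\<^sub>i\<close> and \<open>S\<^sub>i\<close>; these may be
  subtracted from \<open>r\<close> and \<open>s\<close> without changing \<open>r f\<close> and \<open>s g\<close>.\<close>

lemma torsion_correction:
  assumes f: "f \<in> R'.I0R i" and g: "g \<in> S.I0R i" and fg: "psi' i f = sigma i g"
    and S'_I0R: "S'.I0R i = PIdl\<^bsub>Sp i\<^esub> (psi' i f)"
    and r: "r \<in> carrier (Rp i)" and s: "s \<in> carrier (Ss i)"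
    and rs: "psi' i (r \<otimes>\<^bsub>Rp i\<^esub> f) = sigma i (s \<otimes>\<^bsub>Ss i\<^esub> g)"
  shows "\<exists>r' s'. (r', s') \<in> carrier (Rs i) \<and> r' \<otimes>\<^bsub>Rp i\<^esub> f = r \<otimes>\<^bsub>Rp i\<^esub> f \<and>
    s' \<otimes>\<^bsub>Ss i\<^esub> g = s \<otimes>\<^bsub>Ss i\<^esub> g"
proof -
  interpret A: cring "Rp i" by simp
  interpret B: cring "Ss i" by simp
  interpret C: cring "Sp i" by simp
  interpret F: ring_hom_cring "Rp i" "Sp i" "psi' i" by (rule ring_hom_cring_psi')
  interpret G: ring_hom_cring "Ss i" "Sp i" "sigma i" by (rule ring_hom_cring_sigma)
  have fc: "f \<in> carrier (Rp i)" and gc: "g \<in> carrier (Ss i)"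
    using R'.I0R_carrier[OF f] S.I0R_carrier[OF g] .
  define d where "d = psi' i r \<ominus>\<^bsub>Sp i\<^esub> sigma i s"
  have dc: "d \<in> carrier (Sp i)" using r s by (simp add: d_def)
  have "psi' i f \<otimes>\<^bsub>Sp i\<^esub> d = psi' i (r \<otimes>\<^bsub>Rp i\<^esub> f) \<ominus>\<^bsub>Sp i\<^esub> sigma i (s \<otimes>\<^bsub>Ss i\<^esub> g)"
    using r s fc gc fg
    by (simp add: d_def a_minus_def C.r_distr C.r_minus C.m_comm[of "psi' i f"] C.m_comm[of "sigma i g"])
  then have "psi' i f \<otimes>\<^bsub>Sp i\<^esub> d = \<zero>\<^bsub>Sp i\<^esub>" using rs s gc by simp
  then have "d \<in> torR Sp up J'0 i" using S'.mem_torR_of_annihilates_generator[OF dc _ S'_I0R] fc by simp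
  then obtain a0 b0 where a0: "a0 \<in> torR Rp tp I'0 i" and b0: "b0 \<in> torR Ss us J0 i"
    and d: "d = psi' i a0 \<oplus>\<^bsub>Sp i\<^esub> sigma i b0" using tor_surj by blast
  have a0c: "a0 \<in> carrier (Rp i)" and b0c: "b0 \<in> carrier (Ss i)"
    using R'.torR_carrier[OF a0] S.torR_carrier[OF b0] .
  have "psi' i r \<ominus>\<^bsub>Sp i\<^esub> psi' i a0 = sigma i s \<oplus>\<^bsub>Sp i\<^esub> sigma i b0"
    using C.minus_eq_add_swap d r s a0c b0c by (simp add: d_def)
  then have "(r \<ominus>\<^bsub>Rp i\<^esub> a0, s \<oplus>\<^bsub>Ss i\<^esub> b0) \<in> carrier (Rs i)"
    using r s a0c b0c by (simp add: carrier_Rs_iff F.hom_minus)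
  moreover have "(r \<ominus>\<^bsub>Rp i\<^esub> a0) \<otimes>\<^bsub>Rp i\<^esub> f = r \<otimes>\<^bsub>Rp i\<^esub> f"
    using R'.torR_mult_I0R[OF a0 f] r a0c fc
    by (simp add: a_minus_def A.l_distr A.l_minus A.m_comm[of a0])
  moreover have "(s \<oplus>\<^bsub>Ss i\<^esub> b0) \<otimes>\<^bsub>Ss i\<^esub> g = s \<otimes>\<^bsub>Ss i\<^esub> g"
    using S.torR_mult_I0R[OF b0 g] s b0c gc by (simp add: B.l_distr B.m_comm[of b0])
  ultimately show ?thesis by blast
qed

lemma cgenideal_generators_one:
  obtains F G where "(F, G) \<in> carrier (Rs 1)" "I1 [^]\<^bsub>ideals_set (Rs 1)\<^esub> p = PIdl\<^bsub>Rs 1\<^esub> (F, G)"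
    "R'.I0R 1 = PIdl\<^bsub>Rp 1\<^esub> F" "S.I0R 1 = PIdl\<^bsub>Ss 1\<^esub> G" "S'.I0R 1 = PIdl\<^bsub>Sp 1\<^esub> (psi' 1 F)"
proof -
  interpret R1: cring "Rs 1" by (rule cring_Rs)
  interpret F: ring_hom_cring "Rp 1" "Sp 1" "psi' 1" by (rule ring_hom_cring_psi')
  interpret G: ring_hom_cring "Ss 1" "Sp 1" "sigma 1" by (rule ring_hom_cring_sigma)
  obtain f g where fg: "(f, g) \<in> carrier (Rs 1)" "I1 = PIdl\<^bsub>Rs 1\<^esub> (f, g)"
    "I'1 = PIdl\<^bsub>Rp 1\<^esub> f" "J1 = PIdl\<^bsub>Ss 1\<^esub> g" using gen1 by metis
  have f: "f \<in> carrier (Rp 1)" and g: "g \<in> carrier (Ss 1)" and hfg: "psi' 1 f = sigma 1 g"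
    using fg(1) by (simp_all add: carrier_Rs_iff)
  let ?fp = "f [^]\<^bsub>Rp 1\<^esub> p" and ?gp = "g [^]\<^bsub>Ss 1\<^esub> p"
  have "(?fp, ?gp) \<in> carrier (Rs 1)" using R1.nat_pow_closed[OF fg(1)] Rs_nat_pow[OF fg(1)] by simp
  moreover have "I1 [^]\<^bsub>ideals_set (Rs 1)\<^esub> p = PIdl\<^bsub>Rs 1\<^esub> (?fp, ?gp)"
    using cgenideal_ideal_pow[OF cring_Rs fg(1)] fg(2) Rs_nat_pow[OF fg(1)] by simp
  moreover have "R'.I0R 1 = PIdl\<^bsub>Rp 1\<^esub> ?fp" by (rule R'.I0R_one_eq_cgenideal_pow[OF f fg(3)])
  moreover have "S.I0R 1 = PIdl\<^bsub>Ss 1\<^esub> ?gp" by (rule S.I0R_one_eq_cgenideal_pow[OF g fg(4)])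
  moreover have "J'1 = PIdl\<^bsub>Sp 1\<^esub> (sigma 1 g)"
    using ext1_sigma genideal_image_cgenideal[OF S.cring_Rs S'.cring_Rs sigma_hom g] fg(4) by simp
  then have "S'.I0R 1 = PIdl\<^bsub>Sp 1\<^esub> (psi' 1 ?fp)"
    using S'.I0R_one_eq_cgenideal_pow[OF sigma_closed[OF g]] F.ring.hom_nat_pow[OF f]
      G.ring.hom_nat_pow[OF g] hfg by simp
  ultimately show ?thesis using that by blast
qed

lemma I1_pow_Rs: "I1 [^]\<^bsub>ideals_set (Rs 1)\<^esub> p = R.I0R 1"
proof -
  interpret R1: cring "Rs 1" by (rule cring_Rs)
  obtain F G where FG: "(F, G) \<in> carrier (Rs 1)" and I1p: "I1 [^]\<^bsub>ideals_set (Rs 1)\<^esub> p = PIdl\<^bsub>Rs 1\<^esub> (F, G)"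
    and R'1: "R'.I0R 1 = PIdl\<^bsub>Rp 1\<^esub> F" and S1: "S.I0R 1 = PIdl\<^bsub>Ss 1\<^esub> G"
    and S'1: "S'.I0R 1 = PIdl\<^bsub>Sp 1\<^esub> (psi' 1 F)"
    by (rule cgenideal_generators_one)
  have FG_image: "psi' 1 F = sigma 1 G" using FG by (simp add: carrier_Rs_iff)
  have F_mem: "F \<in> R'.I0R 1" and G_mem: "G \<in> S.I0R 1"
    using FG R'1 S1 ring.cgenideal_self[OF R'.ring_Rs] ring.cgenideal_self[OF S.ring_Rs]
    by (simp_all add: carrier_Rs_iff)
  show ?thesis
  proof (intro equalityI subsetI)
    fix z assume "z \<in> I1 [^]\<^bsub>ideals_set (Rs 1)\<^esub> p"
    then obtain r where r: "r \<in> carrier (Rs 1)" "z = r \<otimes>\<^bsub>Rs 1\<^esub> (F, G)"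
      unfolding I1p cgenideal_def by blast
    have "z \<in> carrier (Rs 1)" unfolding r(2) by (rule R1.m_closed[OF r(1) FG])
    moreover have "fst r \<in> carrier (Rp 1)" "snd r \<in> carrier (Ss 1)" using r(1) by (simp_all add: carrier_Rs_iff)
    ultimately show "z \<in> R.I0R 1" unfolding mem_I0R_Rs_iff R'1 S1 using r(2) by (auto simp: cgenideal_def)
  next
    fix z assume "z \<in> R.I0R 1"
    then have z: "z \<in> carrier (Rs 1)" "fst z \<in> PIdl\<^bsub>Rp 1\<^esub> F" "snd z \<in> PIdl\<^bsub>Ss 1\<^esub> G"
      unfolding mem_I0R_Rs_iff R'1 S1 by blast+
    obtain r s where r: "r \<in> carrier (Rp 1)" "fst z = r \<otimes>\<^bsub>Rp 1\<^esub> F"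
      and s: "s \<in> carrier (Ss 1)" "snd z = s \<otimes>\<^bsub>Ss 1\<^esub> G" using z(2,3) by (auto simp: cgenideal_def)
    have "psi' 1 (r \<otimes>\<^bsub>Rp 1\<^esub> F) = sigma 1 (s \<otimes>\<^bsub>Ss 1\<^esub> G)"
      using z(1) r s by (simp add: carrier_Rs_iff)
    then obtain r' s' where rs': "(r', s') \<in> carrier (Rs 1)"
      "r' \<otimes>\<^bsub>Rp 1\<^esub> F = fst z" "s' \<otimes>\<^bsub>Ss 1\<^esub> G = snd z"
      using torsion_correction[OF F_mem G_mem FG_image S'1 r(1) s(1)] r(2) s(2) by metis
    then have "z = (r', s') \<otimes>\<^bsub>Rs 1\<^esub> (F, G)" by (simp add: prod_eq_iff)
    then show "z \<in> I1 [^]\<^bsub>ideals_set (Rs 1)\<^esub> p" unfolding I1p cgenideal_def using rs'(1) by blast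
  qed
qed

lemma torR_Rs_iff:
  "x \<in> torR Rs ts I0 i \<longleftrightarrow>
    x \<in> carrier (Rs i) \<and> fst x \<in> torR Rp tp I'0 i \<and> snd x \<in> torR Ss us J0 i"
proof -
  obtain a b where ab: "(a, b) \<in> carrier (Rs 0)" "I0 = PIdl\<^bsub>Rs 0\<^esub> (a, b)"
    "I'0 = PIdl\<^bsub>Rp 0\<^esub> a" "J0 = PIdl\<^bsub>Ss 0\<^esub> b" using gen0 by metis
  have a: "a \<in> carrier (Rp 0)" and b: "b \<in> carrier (Ss 0)" using ab(1) by (simp_all add: carrier_Rs_iff)
  let ?ha = "tmap tp 0 i a" and ?hb = "tmap us 0 i b"
  have pow: "tmap ts 0 i (a, b) [^]\<^bsub>Rs i\<^esub> n = (?ha [^]\<^bsub>Rp i\<^esub> n, ?hb [^]\<^bsub>Ss i\<^esub> n)" for n :: nat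
    using Rs_nat_pow[OF ring_hom_closed[OF R.tmap0_hom ab(1)]] by (simp add: tmap_ts)
  have tor: "x \<in> torR Rs ts I0 i \<longleftrightarrow> x \<in> carrier (Rs i) \<and>
      (\<exists>n::nat. ?ha [^]\<^bsub>Rp i\<^esub> n \<otimes>\<^bsub>Rp i\<^esub> fst x = \<zero>\<^bsub>Rp i\<^esub> \<and>
                ?hb [^]\<^bsub>Ss i\<^esub> n \<otimes>\<^bsub>Ss i\<^esub> snd x = \<zero>\<^bsub>Ss i\<^esub>)"
    unfolding torR_def ab(2) tor_cgenideal_iff[OF cring_Rs cring_Rs R.tmap0_hom ab(1)] pow
    by (simp add: prod_eq_iff)
  have tor1: "y \<in> torR Rp tp I'0 i \<longleftrightarrow> y \<in> carrier (Rp i) \<and>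
      (\<exists>n::nat. ?ha [^]\<^bsub>Rp i\<^esub> n \<otimes>\<^bsub>Rp i\<^esub> y = \<zero>\<^bsub>Rp i\<^esub>)" for y
    unfolding torR_def ab(3) by (rule tor_cgenideal_iff[OF R'.cring_Rs R'.cring_Rs R'.tmap0_hom a])
  have tor2: "y \<in> torR Ss us J0 i \<longleftrightarrow> y \<in> carrier (Ss i) \<and>
      (\<exists>n::nat. ?hb [^]\<^bsub>Ss i\<^esub> n \<otimes>\<^bsub>Ss i\<^esub> y = \<zero>\<^bsub>Ss i\<^esub>)" for y
    unfolding torR_def ab(4) by (rule tor_cgenideal_iff[OF S.cring_Rs S.cring_Rs S.tmap0_hom b])
  show ?thesis
  proof
    assume "x \<in> torR Rs ts I0 i"
    then show "x \<in> carrier (Rs i) \<and> fst x \<in> torR Rp tp I'0 i \<and> snd x \<in> torR Ss us J0 i"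
      unfolding tor tor1 tor2 carrier_Rs_iff by blast
  next
    assume x: "x \<in> carrier (Rs i) \<and> fst x \<in> torR Rp tp I'0 i \<and> snd x \<in> torR Ss us J0 i"
    have "a \<in> I'0" "b \<in> J0"
      using ab(3,4) ring.cgenideal_self[OF R'.ring_Rs a] ring.cgenideal_self[OF S.ring_Rs b] by simp_all
    then have "?ha \<otimes>\<^bsub>Rp i\<^esub> fst x = \<zero>\<^bsub>Rp i\<^esub>" "?hb \<otimes>\<^bsub>Ss i\<^esub> snd x = \<zero>\<^bsub>Ss i\<^esub>"
      using x R'.I0_annihilates_torR S.I0_annihilates_torR by blast+
    moreover have "?ha [^]\<^bsub>Rp i\<^esub> (1::nat) = ?ha" "?hb [^]\<^bsub>Ss i\<^esub> (1::nat) = ?hb"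
      using ring_hom_closed[OF R'.tmap0_hom a] ring_hom_closed[OF S.tmap0_hom b]
      by (simp_all add: monoid.nat_pow_eone ring.is_monoid)
    ultimately show "x \<in> torR Rs ts I0 i" unfolding tor using x by (intro conjI exI[of _ 1]) simp_all
  qed
qed

lemma I0_annihilates_torR_Rs:
  assumes a: "a \<in> I0" and x: "x \<in> torR Rs ts I0 i"
  shows "tmap ts 0 i a \<otimes>\<^bsub>Rs i\<^esub> x = \<zero>\<^bsub>Rs i\<^esub>"
proof -
  have "fst a \<in> I'0" "snd a \<in> J0" using a by (simp_all add: I0_def mem_fib_set_iff)
  then show ?thesis
    using x R'.I0_annihilates_torR S.I0_annihilates_torR by (simp add: torR_Rs_iff tmap_ts prod_eq_iff)
qed

lemma psi'_torR: "y \<in> torR Rp tp I'0 i \<Longrightarrow> psi' i y \<in> torR Sp up J'0 i"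
proof -
  obtain a where a: "a \<in> carrier (Rp 0)" "I'0 = PIdl\<^bsub>Rp 0\<^esub> a" using R'.gen0 by blast
  have J'0: "J'0 = PIdl\<^bsub>Sp 0\<^esub> (psi' 0 a)"
    using ext0_psi' genideal_image_cgenideal[OF R'.cring_Rs S'.cring_Rs psi'_hom a(1)] a(2) by simp
  assume "y \<in> torR Rp tp I'0 i"
  then show ?thesis
    unfolding torR_def a(2) J'0
    by (intro ring_hom_tor_cgenideal[OF R'.cring_Rs R'.cring_Rs S'.cring_Rs S'.cring_Rs R'.tmap0_hom
        S'.tmap0_hom psi'_hom a(1) psi'_closed[OF a(1)]]) (simp_all add: psi'_tmap[OF a(1), of i, simplified])
qed

lemma sigma_torR: "y \<in> torR Ss us J0 i \<Longrightarrow> sigma i y \<in> torR Sp up J'0 i"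
proof -
  obtain b where b: "b \<in> carrier (Ss 0)" "J0 = PIdl\<^bsub>Ss 0\<^esub> b" using S.gen0 by blast
  have J'0: "J'0 = PIdl\<^bsub>Sp 0\<^esub> (sigma 0 b)"
    using ext0_sigma genideal_image_cgenideal[OF S.cring_Rs S'.cring_Rs sigma_hom b(1)] b(2) by simp
  assume "y \<in> torR Ss us J0 i"
  then show ?thesis
    unfolding torR_def b(2) J'0
    by (intro ring_hom_tor_cgenideal[OF S.cring_Rs S.cring_Rs S'.cring_Rs S'.cring_Rs S.tmap0_hom
        S'.tmap0_hom sigma_hom b(1) sigma_closed[OF b(1)]]) (simp_all add: sigma_tmap[OF b(1), of i, simplified])
qed

lemma psi'_Ftor: "x \<in> torR Rp tp I'0 (Suc i) \<Longrightarrow> S'.Ftor i (psi' (Suc i) x) = psi' i (R'.Ftor i x)"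
  using S'.Ftor_unique psi'_torR R'.Ftor_closed psi'_Frob_rel R'.Frob_rel_Ftor R'.torR_carrier
  by metis

lemma sigma_Ftor: "x \<in> torR Ss us J0 (Suc i) \<Longrightarrow> S'.Ftor i (sigma (Suc i) x) = sigma i (S.Ftor i x)"
  using S'.Ftor_unique sigma_torR S.Ftor_closed sigma_Frob_rel S.Frob_rel_Ftor S.torR_carrier
  by metis

lemma Ftor_Rs_bij:
  "bij_betw (\<lambda>x. (R'.Ftor i (fst x), S.Ftor i (snd x))) (torR Rs ts I0 (Suc i)) (torR Rs ts I0 i)"
proof (rule bij_betwI')
  fix x y assume "x \<in> torR Rs ts I0 (Suc i)" "y \<in> torR Rs ts I0 (Suc i)"
  then show "((R'.Ftor i (fst x), S.Ftor i (snd x)) = (R'.Ftor i (fst y), S.Ftor i (snd y))) = (x = y)"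
    using bij_betw_imp_inj_on[OF R'.Ftor_bij] bij_betw_imp_inj_on[OF S.Ftor_bij]
    unfolding torR_Rs_iff inj_on_def by (metis prod.collapse prod.inject)
next
  fix x assume "x \<in> torR Rs ts I0 (Suc i)"
  then have x: "fst x \<in> torR Rp tp I'0 (Suc i)" "snd x \<in> torR Ss us J0 (Suc i)"
    "psi' (Suc i) (fst x) = sigma (Suc i) (snd x)" by (simp_all add: torR_Rs_iff carrier_Rs_iff)
  have "psi' i (R'.Ftor i (fst x)) = sigma i (S.Ftor i (snd x))"
    using psi'_Ftor[OF x(1)] sigma_Ftor[OF x(2)] x(3) by simp
  then show "(R'.Ftor i (fst x), S.Ftor i (snd x)) \<in> torR Rs ts I0 i"
    using R'.Ftor_closed[OF x(1)] S.Ftor_closed[OF x(2)] R'.torR_carrier S.torR_carrier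
    by (simp add: torR_Rs_iff carrier_Rs_iff)
next
  fix y assume "y \<in> torR Rs ts I0 i"
  then have y: "y \<in> carrier (Rs i)" "fst y \<in> torR Rp tp I'0 i" "snd y \<in> torR Ss us J0 i"
    by (simp_all add: torR_Rs_iff)
  obtain x1 where x1: "x1 \<in> torR Rp tp I'0 (Suc i)" "fst y = R'.Ftor i x1"
    using y(2) R'.Ftor_bij unfolding bij_betw_def by auto
  obtain x2 where x2: "x2 \<in> torR Ss us J0 (Suc i)" "snd y = S.Ftor i x2"
    using y(3) S.Ftor_bij unfolding bij_betw_def by auto
  have "S'.Ftor i (psi' (Suc i) x1) = S'.Ftor i (sigma (Suc i) x2)"
    using psi'_Ftor[OF x1(1)] sigma_Ftor[OF x2(1)] x1(2) x2(2) y(1) by (simp add: carrier_Rs_iff)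
  then have "psi' (Suc i) x1 = sigma (Suc i) x2"
    using bij_betw_imp_inj_on[OF S'.Ftor_bij] psi'_torR[OF x1(1)] sigma_torR[OF x2(1)]
    unfolding inj_on_def by blast
  then have "(x1, x2) \<in> torR Rs ts I0 (Suc i)"
    using x1(1) x2(1) R'.torR_carrier S.torR_carrier by (simp add: torR_Rs_iff carrier_Rs_iff)
  moreover have "y = (R'.Ftor i (fst (x1, x2)), S.Ftor i (snd (x1, x2)))" using x1(2) x2(2) by (simp add: prod_eq_iff)
  ultimately show "\<exists>x\<in>torR Rs ts I0 (Suc i). y = (R'.Ftor i (fst x), S.Ftor i (snd x))" by blast
qed

lemma Frob_Ftor_Rs:
  assumes x: "x \<in> torR Rs ts I0 (Suc i)"
  shows "R.I0R i +>\<^bsub>Rs i\<^esub> (R'.Ftor i (fst x), S.Ftor i (snd x)) =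
    Frob p Rs ts I0 i (R.I0R (Suc i) +>\<^bsub>Rs (Suc i)\<^esub> x)"
proof -
  have "(R'.Ftor i (fst x), S.Ftor i (snd x)) \<in> torR Rs ts I0 i"
    using bij_betwE[OF Ftor_Rs_bij] x by blast
  then have "Frob p Rs ts I0 i (R.I0R (Suc i) +>\<^bsub>Rs (Suc i)\<^esub> x) =
      R.I0R i +>\<^bsub>Rs i\<^esub> (R'.Ftor i (fst x), S.Ftor i (snd x))"
    using x Frob_coset_Rs_eq_iff R'.Frob_rel_Ftor S.Frob_rel_Ftor by (simp add: torR_Rs_iff)
  then show ?thesis by simp
qed

theorem preperfectoid_Rs: "preperfectoid p Rs ts I0 I1"
  unfolding preperfectoid_def
proof (intro conjI allI ballI)
  show "tower Rs ts" by (rule R.tower)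
  show "ideal I0 (Rs 0)" by (rule ideal_I0)
  show "add_pow (Rs 0) p \<one>\<^bsub>Rs 0\<^esub> \<in> I0" by (rule add_pow_one_mem_I0)
  show "\<exists>f\<in>carrier (Rs 0). I0 = PIdl\<^bsub>Rs 0\<^esub> f" "\<exists>f\<in>carrier (Rs 1). I1 = PIdl\<^bsub>Rs 1\<^esub> f"
    using gen0 gen1 by blast+
  show "I1 [^]\<^bsub>ideals_set (Rs 1)\<^esub> p = R.I0R 1" by (rule I1_pow_Rs)
  fix i
  show "inj_on (tbar Rs ts I0 i) (carrier (Rbar Rs ts I0 i))" by (rule tbar_Rs_inj)
  show "Frob p Rs ts I0 i ` carrier (Rbar Rs ts I0 (Suc i)) = carrier (Rbar Rs ts I0 i)"
    by (rule Frob_Rs_surj)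
  show "a_kernel (Rbar Rs ts I0 (Suc i)) (Rbar Rs ts I0 i) (Frob p Rs ts I0 i) =
      (\<lambda>x. R.I0R (Suc i) +>\<^bsub>Rs (Suc i)\<^esub> x) ` extI Rs ts 1 I1 i" by (rule a_kernel_Frob_Rs)
  show "\<exists>G. bij_betw G (torR Rs ts I0 (Suc i)) (torR Rs ts I0 i) \<and>
      (\<forall>x\<in>torR Rs ts I0 (Suc i). R.I0R i +>\<^bsub>Rs i\<^esub> G x =
        Frob p Rs ts I0 i (R.I0R (Suc i) +>\<^bsub>Rs (Suc i)\<^esub> x))"
    using Ftor_Rs_bij Frob_Ftor_Rs by blast
next
  fix i Y assume "Y \<in> carrier (Rbar Rs ts I0 (Suc i))"
  then show "Y [^]\<^bsub>Rbar Rs ts I0 (Suc i)\<^esub> p \<in> tbar Rs ts I0 i ` carrier (Rbar Rs ts I0 i)"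
    by (rule Frob_pow_in_tbar_image)
next
  fix i a x assume "a \<in> I0" "x \<in> torR Rs ts I0 i"
  then show "tmap ts 0 i a \<otimes>\<^bsub>Rs i\<^esub> x = \<zero>\<^bsub>Rs i\<^esub>" by (rule I0_annihilates_torR_Rs)
qed

theorem perfectoid_Rs:
  assumes "perfectoid p Rp tp I'0 I'1" and "perfectoid p Ss us J0 J1"
  shows "perfectoid p Rs ts I0 I1"
  unfolding perfectoid_def
proof (intro conjI allI subsetI preperfectoid_Rs)
  fix i x assume x: "x \<in> R.I0R i"
  then have "fst x \<in> jacobson (Rp i)" "snd x \<in> jacobson (Ss i)"
    using assms by (auto simp: perfectoid_def mem_I0R_Rs_iff)
  then show "x \<in> jacobson (Rs i)" using jacobson_Rs x mem_I0R_Rs_iff by blast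
qed

sublocale R: preperfectoid_tower p Rs ts I0 I1
  using p_prime preperfectoid_Rs by (rule preperfectoid_tower.intro)

lemma I0R_Rs_coset_eq_iff:
  assumes v: "v \<in> carrier (Rs k)" and w: "w \<in> carrier (Rs k)"
  shows "R.I0R k +>\<^bsub>Rs k\<^esub> v = R.I0R k +>\<^bsub>Rs k\<^esub> w \<longleftrightarrow>
    R'.I0R k +>\<^bsub>Rp k\<^esub> fst v = R'.I0R k +>\<^bsub>Rp k\<^esub> fst w \<and>
    S.I0R k +>\<^bsub>Ss k\<^esub> snd v = S.I0R k +>\<^bsub>Ss k\<^esub> snd w"
proof -
  interpret R: cring "Rs k" by (rule cring_Rs)
  show ?thesis
    using v w R.minus_closed[OF v w] Rs_minus[OF v w]
    by (simp add: R.I0R_coset_eq_iff R'.I0R_coset_eq_iff S.I0R_coset_eq_iff mem_I0R_Rs_iff carrier_Rs_iff)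
qed

lemma ind_map_fst_coset:
  "w \<in> carrier (Rs k) \<Longrightarrow> ind_map (Rp k) (R'.I0R k) fst (R.I0R k +>\<^bsub>Rs k\<^esub> w) = R'.I0R k +>\<^bsub>Rp k\<^esub> fst w"
  by (rule ind_map_a_r_coset[OF R.ring_Rs R'.ring_Rs fst_hom R.ideal_I0R R'.ideal_I0R])
    (auto simp: mem_I0R_Rs_iff)

lemma ind_map_snd_coset:
  "w \<in> carrier (Rs k) \<Longrightarrow> ind_map (Ss k) (S.I0R k) snd (R.I0R k +>\<^bsub>Rs k\<^esub> w) = S.I0R k +>\<^bsub>Ss k\<^esub> snd w"
  by (rule ind_map_a_r_coset[OF R.ring_Rs S.ring_Rs snd_hom R.ideal_I0R S.ideal_I0R])
    (auto simp: mem_I0R_Rs_iff)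

lemma ind_map_psi'_coset:
  "a \<in> carrier (Rp k) \<Longrightarrow> ind_map (Sp k) (S'.I0R k) (psi' k) (R'.I0R k +>\<^bsub>Rp k\<^esub> a) = S'.I0R k +>\<^bsub>Sp k\<^esub> psi' k a"
  by (rule ind_map_a_r_coset[OF R'.ring_Rs S'.ring_Rs psi'_hom R'.ideal_I0R S'.ideal_I0R psi'_I0R])

lemma ind_map_sigma_coset:
  "b \<in> carrier (Ss k) \<Longrightarrow> ind_map (Sp k) (S'.I0R k) (sigma k) (S.I0R k +>\<^bsub>Ss k\<^esub> b) = S'.I0R k +>\<^bsub>Sp k\<^esub> sigma k b"
  by (rule ind_map_a_r_coset[OF S.ring_Rs S'.ring_Rs sigma_hom S.ideal_I0R S'.ideal_I0R])
    (use S'_I0R_eq in blast)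

abbreviation tilt_pair :: "nat \<Rightarrow> (nat \<Rightarrow> ('a \<times> 'b) set) \<Rightarrow> (nat \<Rightarrow> 'a set) \<times> (nat \<Rightarrow> 'b set)" where
  "tilt_pair i x \<equiv> (tilt_mor Rp tp I'0 (\<lambda>k. fst) i x, tilt_mor Ss us J0 (\<lambda>k. snd) i x)"

lemma tilt_pair_cosets:
  "tilt_pair i (\<lambda>j. R.I0R (i + j) +>\<^bsub>Rs (i + j)\<^esub> w j) =
    ((\<lambda>j. R'.I0R (i + j) +>\<^bsub>Rp (i + j)\<^esub> fst (w j)), (\<lambda>j. S.I0R (i + j) +>\<^bsub>Ss (i + j)\<^esub> snd (w j)))"
  if "\<And>j. w j \<in> carrier (Rs (i + j))"
  using that by (simp add: tilt_mor_def ind_map_fst_coset ind_map_snd_coset)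

lemma tilt_pair_closed:
  assumes x: "x \<in> carrier (tilt p Rs ts I0 i)"
  shows "tilt_pair i x \<in> carrier (fibprod (tilt p Rp tp I'0 i) (tilt p Ss us J0 i)
    (tilt_mor Sp up J'0 psi' i) (tilt_mor Sp up J'0 sigma i))"
proof -
  obtain w where w: "\<And>j. w j \<in> carrier (Rs (i + j))" and xw: "x = (\<lambda>j. R.I0R (i + j) +>\<^bsub>Rs (i + j)\<^esub> w j)"
    using R.tilt_representatives[OF x] by blast
  have wc: "fst (w j) \<in> carrier (Rp (i + j))" "snd (w j) \<in> carrier (Ss (i + j))"
    "psi' (i + j) (fst (w j)) = sigma (i + j) (snd (w j))" for j
    using w by (simp_all add: carrier_Rs_iff)
  have "R.Frob_rel (i + j) (w (Suc j)) (w j)" for j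
    using x R.coset_seq_in_tilt_iff[OF w] unfolding xw by blast
  then have F: "R'.Frob_rel (i + j) (fst (w (Suc j))) (fst (w j)) \<and>
      S.Frob_rel (i + j) (snd (w (Suc j))) (snd (w j))" for j
    using Frob_rel_Rs_iff[of "w (Suc j)" "i + j" "w j"] w[of "Suc j"] w[of j] by simp
  show ?thesis
    unfolding xw tilt_pair_cosets[OF w]
    using R'.coset_seq_in_tilt_iff[OF wc(1)] S.coset_seq_in_tilt_iff[OF wc(2)] F wc
    by (simp add: mem_fib_set_iff tilt_mor_def ind_map_psi'_coset ind_map_sigma_coset)
qed

lemma tilt_pair_ring_hom:
  "tilt_pair i \<in> ring_hom (tilt p Rs ts I0 i) (fibprod (tilt p Rp tp I'0 i) (tilt p Ss us J0 i)
    (tilt_mor Sp up J'0 psi' i) (tilt_mor Sp up J'0 sigma i))"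
proof (rule ring_hom_memI)
  fix x y assume x: "x \<in> carrier (tilt p Rs ts I0 i)" and y: "y \<in> carrier (tilt p Rs ts I0 i)"
  obtain v where v: "\<And>j. v j \<in> carrier (Rs (i + j))" and xv: "x = (\<lambda>j. R.I0R (i + j) +>\<^bsub>Rs (i + j)\<^esub> v j)"
    using R.tilt_representatives[OF x] by blast
  obtain w where w: "\<And>j. w j \<in> carrier (Rs (i + j))" and yw: "y = (\<lambda>j. R.I0R (i + j) +>\<^bsub>Rs (i + j)\<^esub> w j)"
    using R.tilt_representatives[OF y] by blast
  have vw: "v j \<otimes>\<^bsub>Rs (i + j)\<^esub> w j \<in> carrier (Rs (i + j))" "v j \<oplus>\<^bsub>Rs (i + j)\<^esub> w j \<in> carrier (Rs (i + j))" for j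
    using cring.cring_simprules(5,1)[OF cring_Rs v w] by auto
  have c: "fst (v j) \<in> carrier (Rp (i + j))" "snd (v j) \<in> carrier (Ss (i + j))"
    "fst (w j) \<in> carrier (Rp (i + j))" "snd (w j) \<in> carrier (Ss (i + j))" for j
    using v w by (simp_all add: carrier_Rs_iff)
  show "tilt_pair i (x \<otimes>\<^bsub>tilt p Rs ts I0 i\<^esub> y) = tilt_pair i x \<otimes>\<^bsub>fibprod (tilt p Rp tp I'0 i)
      (tilt p Ss us J0 i) (tilt_mor Sp up J'0 psi' i) (tilt_mor Sp up J'0 sigma i)\<^esub> tilt_pair i y"
    unfolding xv yw R.tilt_mult_cosets[OF v w] tilt_pair_cosets[OF vw(1)] tilt_pair_cosets[OF v]
      tilt_pair_cosets[OF w]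
    using c by (simp add: R'.tilt_mult_cosets S.tilt_mult_cosets)
  show "tilt_pair i (x \<oplus>\<^bsub>tilt p Rs ts I0 i\<^esub> y) = tilt_pair i x \<oplus>\<^bsub>fibprod (tilt p Rp tp I'0 i)
      (tilt p Ss us J0 i) (tilt_mor Sp up J'0 psi' i) (tilt_mor Sp up J'0 sigma i)\<^esub> tilt_pair i y"
    unfolding xv yw R.tilt_add_cosets[OF v w] tilt_pair_cosets[OF vw(2)] tilt_pair_cosets[OF v]
      tilt_pair_cosets[OF w]
    using c by (simp add: R'.tilt_add_cosets S.tilt_add_cosets)
next
  show "tilt_pair i (\<one>\<^bsub>tilt p Rs ts I0 i\<^esub>) = \<one>\<^bsub>fibprod (tilt p Rp tp I'0 i)
      (tilt p Ss us J0 i) (tilt_mor Sp up J'0 psi' i) (tilt_mor Sp up J'0 sigma i)\<^esub>"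
    using tilt_pair_cosets[of "\<lambda>j. \<one>\<^bsub>Rs (i + j)\<^esub>" i] cring.cring_simprules(6)[OF cring_Rs]
    by (simp add: R.tilt_one R'.tilt_one S.tilt_one)
qed (rule tilt_pair_closed)

end

context preperfectoid_fibre_product
begin

lemma inj_on_tilt_pair: "inj_on (tilt_pair i) (carrier (tilt p Rs ts I0 i))"
proof (rule inj_onI)
  fix x y assume x: "x \<in> carrier (tilt p Rs ts I0 i)" and y: "y \<in> carrier (tilt p Rs ts I0 i)"
    and eq: "tilt_pair i x = tilt_pair i y"
  obtain v where v: "\<And>j. v j \<in> carrier (Rs (i + j))" and xv: "x = (\<lambda>j. R.I0R (i + j) +>\<^bsub>Rs (i + j)\<^esub> v j)"
    using R.tilt_representatives[OF x] by blast
  obtain w where w: "\<And>j. w j \<in> carrier (Rs (i + j))" and yw: "y = (\<lambda>j. R.I0R (i + j) +>\<^bsub>Rs (i + j)\<^esub> w j)"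
    using R.tilt_representatives[OF y] by blast
  have "R'.I0R (i + j) +>\<^bsub>Rp (i + j)\<^esub> fst (v j) = R'.I0R (i + j) +>\<^bsub>Rp (i + j)\<^esub> fst (w j)"
    "S.I0R (i + j) +>\<^bsub>Ss (i + j)\<^esub> snd (v j) = S.I0R (i + j) +>\<^bsub>Ss (i + j)\<^esub> snd (w j)" for j
    using eq unfolding xv yw tilt_pair_cosets[OF v] tilt_pair_cosets[OF w] by (simp_all add: fun_eq_iff)
  then show "x = y" unfolding xv yw using I0R_Rs_coset_eq_iff[OF v w] by (simp add: fun_eq_iff)
qed

text \<open>A compatible pair of points of the tilts is lifted levelwise with \<open>lift_to_Rs\<close>; the new
  \<open>S\<close>-components differ from the old ones by elements of \<open>J\<^sub>0S\<^sub>j \<subseteq> J\<^sub>1S\<^sub>j\<close>, which does not affect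
  the Frobenius projections.\<close>

lemma lift_Frob_chain:
  assumes a: "\<And>j. a j \<in> carrier (Rp (i + j))" and b: "\<And>j. b j \<in> carrier (Ss (i + j))"
    and Fb: "\<And>j. S.Frob_rel (i + j) (b (Suc j)) (b j)"
    and ab: "\<And>j. psi' (i + j) (a j) \<ominus>\<^bsub>Sp (i + j)\<^esub> sigma (i + j) (b j) \<in> S'.I0R (i + j)"
  obtains b' where "\<And>j. (a j, b' j) \<in> carrier (Rs (i + j))"
    "\<And>j. b' j \<ominus>\<^bsub>Ss (i + j)\<^esub> b j \<in> S.I0R (i + j)" "\<And>j. S.Frob_rel (i + j) (b' (Suc j)) (b' j)"
proof -
  have "\<forall>j. \<exists>b'. (a j, b') \<in> carrier (Rs (i + j)) \<and> b' \<ominus>\<^bsub>Ss (i + j)\<^esub> b j \<in> S.I0R (i + j)"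
    using lift_to_Rs a b ab by blast
  then obtain b' where ab': "\<And>j. (a j, b' j) \<in> carrier (Rs (i + j))"
    and bb': "\<And>j. b' j \<ominus>\<^bsub>Ss (i + j)\<^esub> b j \<in> S.I0R (i + j)" by metis
  have b'c: "b' j \<in> carrier (Ss (i + j))" for j using ab' by (simp add: carrier_Rs_iff)
  have "S.Frob_rel (i + j) (b' (Suc j)) (b' j)" for j
  proof -
    have suc: "b (Suc j) \<in> carrier (Ss (Suc (i + j)))" "b' (Suc j) \<in> carrier (Ss (Suc (i + j)))"
      "b' (Suc j) \<ominus>\<^bsub>Ss (Suc (i + j))\<^esub> b (Suc j) \<in> S.I1R (i + j)"
      using b[of "Suc j"] b'c[of "Suc j"] bb'[of "Suc j"] S.I0R_subset_I1R[of "i + j"] by auto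
    have "S.Frob_rel (i + j) (b' (Suc j)) (b j)"
      by (rule S.Frob_rel_I1R_cong[OF suc(1,2) b suc(3) Fb])
    then show ?thesis by (rule S.Frob_rel_cong[OF suc(2) b b'c _ bb'])
  qed
  then show ?thesis using that ab' bb' by blast
qed

lemma tilt_pair_surj:
  assumes "Z \<in> carrier (fibprod (tilt p Rp tp I'0 i) (tilt p Ss us J0 i)
      (tilt_mor Sp up J'0 psi' i) (tilt_mor Sp up J'0 sigma i))"
  shows "\<exists>x\<in>carrier (tilt p Rs ts I0 i). Z = tilt_pair i x"
proof -
  have X: "fst Z \<in> carrier (tilt p Rp tp I'0 i)" and Y: "snd Z \<in> carrier (tilt p Ss us J0 i)"
    and XY: "tilt_mor Sp up J'0 psi' i (fst Z) = tilt_mor Sp up J'0 sigma i (snd Z)"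
    using assms by (simp_all add: mem_fib_set_iff)
  obtain a where a: "\<And>j. a j \<in> carrier (Rp (i + j))" and Xa: "fst Z = (\<lambda>j. R'.I0R (i + j) +>\<^bsub>Rp (i + j)\<^esub> a j)"
    using R'.tilt_representatives[OF X] by blast
  obtain b where b: "\<And>j. b j \<in> carrier (Ss (i + j))" and Yb: "snd Z = (\<lambda>j. S.I0R (i + j) +>\<^bsub>Ss (i + j)\<^esub> b j)"
    using S.tilt_representatives[OF Y] by blast
  have Fa: "R'.Frob_rel (i + j) (a (Suc j)) (a j)" and Fb: "S.Frob_rel (i + j) (b (Suc j)) (b j)" for j
    using X Y R'.coset_seq_in_tilt_iff[OF a] S.coset_seq_in_tilt_iff[OF b] unfolding Xa Yb by blast+
  have "S'.I0R (i + j) +>\<^bsub>Sp (i + j)\<^esub> psi' (i + j) (a j) = S'.I0R (i + j) +>\<^bsub>Sp (i + j)\<^esub> sigma (i + j) (b j)" for j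
    using XY a b unfolding Xa Yb by (simp add: tilt_mor_def ind_map_psi'_coset ind_map_sigma_coset fun_eq_iff)
  then have "psi' (i + j) (a j) \<ominus>\<^bsub>Sp (i + j)\<^esub> sigma (i + j) (b j) \<in> S'.I0R (i + j)" for j
    using S'.I0R_coset_eq_iff a b by simp
  then obtain b' where ab': "\<And>j. (a j, b' j) \<in> carrier (Rs (i + j))"
    and bb': "\<And>j. b' j \<ominus>\<^bsub>Ss (i + j)\<^esub> b j \<in> S.I0R (i + j)" and Fb': "\<And>j. S.Frob_rel (i + j) (b' (Suc j)) (b' j)"
    using lift_Frob_chain[OF a b Fb] by blast
  have "(a (Suc j), b' (Suc j)) \<in> carrier (Rs (Suc (i + j)))" for j using ab'[of "Suc j"] by simp
  then have "R.Frob_rel (i + j) ((a (Suc j), b' (Suc j))) (a j, b' j)" for j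
    using Frob_rel_Rs_iff ab' Fa Fb' by simp
  then have "(\<lambda>j. R.I0R (i + j) +>\<^bsub>Rs (i + j)\<^esub> (a j, b' j)) \<in> carrier (tilt p Rs ts I0 i)"
    using R.coset_seq_in_tilt_iff[OF ab'] by blast
  moreover have "b' j \<in> carrier (Ss (i + j))" for j using ab' by (simp add: carrier_Rs_iff)
  then have "tilt_pair i (\<lambda>j. R.I0R (i + j) +>\<^bsub>Rs (i + j)\<^esub> (a j, b' j)) = Z"
    unfolding tilt_pair_cosets[OF ab'] using Xa Yb bb' b
    by (simp add: prod_eq_iff fun_eq_iff S.I0R_coset_eq_iff)
  ultimately show ?thesis by (metis (no_types))
qed

lemma tilt_pair_bij:
  "bij_betw (tilt_pair i) (carrier (tilt p Rs ts I0 i)) (carrier (fibprod (tilt p Rp tp I'0 i)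
    (tilt p Ss us J0 i) (tilt_mor Sp up J'0 psi' i) (tilt_mor Sp up J'0 sigma i)))"
  unfolding bij_betw_def using inj_on_tilt_pair tilt_pair_closed tilt_pair_surj by blast

lemma tilt_pair_ring_iso:
  "tilt_pair i \<in> ring_iso (tilt p Rs ts I0 i) (fibprod (tilt p Rp tp I'0 i)
    (tilt p Ss us J0 i) (tilt_mor Sp up J'0 psi' i) (tilt_mor Sp up J'0 sigma i))"
  unfolding ring_iso_def using tilt_pair_ring_hom tilt_pair_bij by blast

lemma tilt_pair_tilt_t:
  assumes x: "x \<in> carrier (tilt p Rs ts I0 i)"
  shows "tilt_pair (Suc i) (tilt_t Rs ts I0 i x) =
    (tilt_t Rp tp I'0 i (fst (tilt_pair i x)), tilt_t Ss us J0 i (snd (tilt_pair i x)))"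
proof -
  obtain w where w: "\<And>j. w j \<in> carrier (Rs (i + j))" and xw: "x = (\<lambda>j. R.I0R (i + j) +>\<^bsub>Rs (i + j)\<^esub> w j)"
    using R.tilt_representatives[OF x] by blast
  have tw: "ts (i + j) (w j) \<in> carrier (Rs (Suc i + j))" for j using ring_hom_closed[OF ts_hom w] by simp
  have "tilt_t Rs ts I0 i x = (\<lambda>j. R.I0R (Suc i + j) +>\<^bsub>Rs (Suc i + j)\<^esub> ts (i + j) (w j))"
    unfolding xw tilt_t_def using R.tbar_coset[OF w] by simp
  then have "tilt_pair (Suc i) (tilt_t Rs ts I0 i x) =
      ((\<lambda>j. R'.I0R (Suc i + j) +>\<^bsub>Rp (Suc i + j)\<^esub> fst (ts (i + j) (w j))),
       (\<lambda>j. S.I0R (Suc i + j) +>\<^bsub>Ss (Suc i + j)\<^esub> snd (ts (i + j) (w j))))"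
    using tilt_pair_cosets[OF tw] by simp
  also have "\<dots> = (tilt_t Rp tp I'0 i (fst (tilt_pair i x)), tilt_t Ss us J0 i (snd (tilt_pair i x)))"
    unfolding xw tilt_pair_cosets[OF w]
    using w by (simp add: tilt_t_def R'.tbar_coset S.tbar_coset carrier_Rs_iff ts_apply)
  finally show ?thesis .
qed

end

theorem proposition3p16:
  fixes p :: nat
    and Rp :: "nat \<Rightarrow> 'a ring" and tp :: "nat \<Rightarrow> 'a \<Rightarrow> 'a" and I'0 I'1 :: "'a set"
    and Ss :: "nat \<Rightarrow> 'b ring" and us :: "nat \<Rightarrow> 'b \<Rightarrow> 'b" and J0 J1 :: "'b set"
    and Sp :: "nat \<Rightarrow> 'c ring" and up :: "nat \<Rightarrow> 'c \<Rightarrow> 'c" and J'0 J'1 :: "'c set"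
    and psi' :: "nat \<Rightarrow> 'a \<Rightarrow> 'c" and sigma :: "nat \<Rightarrow> 'b \<Rightarrow> 'c"
    and Rs :: "nat \<Rightarrow> ('a \<times> 'b) ring" and ts :: "nat \<Rightarrow> 'a \<times> 'b \<Rightarrow> 'a \<times> 'b"
    and I0 I1 :: "('a \<times> 'b) set"
  assumes p_prime: "Factorial_Ring.prime p"
    and R'_pre: "preperfectoid p Rp tp I'0 I'1"
    and S_pre: "preperfectoid p Ss us J0 J1"
    and S'_pre: "preperfectoid p Sp up J'0 J'1"
    and psi'_mor: "tower_mor Rp tp Sp up psi'"
    and sigma_mor: "tower_mor Ss us Sp up sigma"
    and ext0_psi': "Idl\<^bsub>Sp 0\<^esub> (psi' 0 ` I'0) = J'0"
    and ext0_sigma: "Idl\<^bsub>Sp 0\<^esub> (sigma 0 ` J0) = J'0"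
    and ext1_psi': "Idl\<^bsub>Sp 1\<^esub> (psi' 1 ` I'1) = J'1"
    and ext1_sigma: "Idl\<^bsub>Sp 1\<^esub> (sigma 1 ` J1) = J'1"
    and sigma_surj: "\<forall>i. sigma i ` carrier (Ss i) = carrier (Sp i)"
    and Rs_def: "Rs = (\<lambda>i. fibprod (Rp i) (Ss i) (psi' i) (sigma i))"
    and ts_def: "ts = (\<lambda>i x. (tp i (fst x), us i (snd x)))"
    and I0_def: "I0 = fib_set I'0 J0 (psi' 0) (sigma 0)"
    and I1_def: "I1 = fib_set I'1 J1 (psi' 1) (sigma 1)"
    and gen0: "\<exists>f'0 g0. (f'0, g0) \<in> carrier (Rs 0) \<and> I0 = PIdl\<^bsub>Rs 0\<^esub> (f'0, g0) \<and>
                 PIdl\<^bsub>Rp 0\<^esub> f'0 = I'0 \<and> PIdl\<^bsub>Ss 0\<^esub> g0 = J0"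
    and gen1: "\<exists>f'1 g1. (f'1, g1) \<in> carrier (Rs 1) \<and> I1 = PIdl\<^bsub>Rs 1\<^esub> (f'1, g1) \<and>
                 PIdl\<^bsub>Rp 1\<^esub> f'1 = I'1 \<and> PIdl\<^bsub>Ss 1\<^esub> g1 = J1"
    and cart0: "\<forall>i. cartesian (extI Rs ts 0 I0 i) (extI Rp tp 0 I'0 i) (extI Ss us 0 J0 i)
                   fst snd (psi' i) (sigma i)"
    and cart1: "\<forall>i. cartesian (extI Rs ts 1 I1 i) (extI Rp tp 1 I'1 i) (extI Ss us 1 J1 i)
                   fst snd (psi' (Suc i)) (sigma (Suc i))"
    and tor_surj: "\<forall>i. \<forall>z\<in>torR Sp up J'0 i. \<exists>a\<in>torR Rp tp I'0 i. \<exists>b\<in>torR Ss us J0 i.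
                   z = psi' i a \<oplus>\<^bsub>Sp i\<^esub> sigma i b"
  shows "preperfectoid p Rs ts I0 I1
    \<and> (perfectoid p Rp tp I'0 I'1 \<and> perfectoid p Ss us J0 J1 \<and> perfectoid p Sp up J'0 J'1
         \<longrightarrow> perfectoid p Rs ts I0 I1)
    \<and> (\<forall>i. (\<lambda>x. (tilt_mor Rp tp I'0 (\<lambda>k. fst) i x, tilt_mor Ss us J0 (\<lambda>k. snd) i x))
            \<in> ring_iso (tilt p Rs ts I0 i)
                 (fibprod (tilt p Rp tp I'0 i) (tilt p Ss us J0 i)
                    (tilt_mor Sp up J'0 psi' i) (tilt_mor Sp up J'0 sigma i)))
    \<and> (\<forall>i. \<forall>x\<in>carrier (tilt p Rs ts I0 i).
          (tilt_mor Rp tp I'0 (\<lambda>k. fst) (Suc i) (tilt_t Rs ts I0 i x),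
           tilt_mor Ss us J0 (\<lambda>k. snd) (Suc i) (tilt_t Rs ts I0 i x))
          = (tilt_t Rp tp I'0 i (tilt_mor Rp tp I'0 (\<lambda>k. fst) i x),
             tilt_t Ss us J0 i (tilt_mor Ss us J0 (\<lambda>k. snd) i x)))"
proof -
  interpret preperfectoid_fibre_product p Rp tp I'0 I'1 Ss us J0 J1 Sp up J'0 J'1 psi' sigma
      Rs ts I0 I1
    by (rule preperfectoid_fibre_product.intro; fact)
  show ?thesis
    using preperfectoid_Rs perfectoid_Rs tilt_pair_ring_iso tilt_pair_tilt_t by simp
qed

end
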